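(* Consider the first-order system described in the context with arbitrary initial data $(Q^0,\mathcal N)=(q_1^0,\dots,q_N^0,\nu_1,\dots,\nu_N)\in\mathbb R^{2N}$. Then: (1) The system has a unique global classical solution (each $q_i\in C^1(\mathbb R_+;\mathbb R)$); in particular $C_i(t)$, $S_i(t)$ and $\mathcal T$ are well defined for each $i\in[N]$ and $t\in\mathbb R_+$. (2) For each $i\in[N]$, $|C_i(t)|=0$ for all but finitely many $t\in\mathbb R_+$. (3) For each $i\in[N]$ and $0\le s\le t<\infty$, $S_i(s)\subset S_i(t)$; in particular $|S_i|$ is a right-continuous nondecreasing step function. (4) $\mathcal T$ is a finite set.
   Context: Let $N\ge1$, $\kappa>0$, $\alpha\in(0,1)$, $[N]=\{1,\dots,N\}$, $\mathbb R_+=(0,\infty)$. The function $G:\mathbb R\to\mathbb R$ is $G(p)=g(|p|)\,p/|p|$ for $p\ne0$, $G(0)=0$, with $g\in C^1([0,\infty))$, $g(0)=0$, $0<m\le g'\le M$ on every compact interval (constants depending on the interval), and $g$ convex or concave on $(0,\infty)$. Let $\Psi(r)=\int_0^r|x|^{-\alpha}dx=\mathrm{sgn}(r)\frac{|r|^{1-\alpha}}{1-\alpha}$. The first-order system is \[ \dot q_i=G\Big(\nu_i+\frac{\kappa}{N}\sum_{k=1}^N\Psi(q_k-q_i)\Big),\quad q_i(0)=q_i^0,\quad i\in[N]. \] For a classical solution $Q$: $q_i,q_j$ collide at time $t$ if $q_i(t)=q_j(t)$ but $\dot q_i(t)\ne\dot q_j(t)$; they stick at time $t$ if $q_i(t)=q_j(t)$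 and $\dot q_i(t)=\dot q_j(t)$. Define $C_i(t)=\{j\in[N]: q_i,q_j \text{ collide at } t\}$, $S_i(t)=\{j\in[N]: q_i,q_j\text{ stick at }t\}$, and \[ \mathcal T=\bigcup_{i\in[N]}\big(\{t\in\mathbb R_+:|C_i(t)|\ne0\}\cup\{t\in\mathbb R_+:|S_i|\text{ is discontinuous at }t\}\big). \] *)

theory Defs
  imports "HOL-Analysis.Analysis"
begin

definition Gf :: "(real \<Rightarrow> real) \<Rightarrow> real \<Rightarrow> real" where
  "Gf g p = (if p = 0 then 0 else g \<bar>p\<bar> * p / \<bar>p\<bar>)"

text \<open>Psi(r) = integral of |x|^(-alpha) from 0 to r = sgn(r) |r|^(1-alpha)/(1-alpha).\<close>
definition Psi :: "real \<Rightarrow> real \<Rightarrow> real" where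
  "Psi \<alpha> r = sgn r * \<bar>r\<bar> powr (1 - \<alpha>) / (1 - \<alpha>)"

definition rhs :: "(real \<Rightarrow> real) \<Rightarrow> real \<Rightarrow> real \<Rightarrow> nat \<Rightarrow> (nat \<Rightarrow> real)
     \<Rightarrow> (nat \<Rightarrow> real \<Rightarrow> real) \<Rightarrow> nat \<Rightarrow> real \<Rightarrow> real" where
  "rhs g \<kappa> \<alpha> N \<nu> Q i t =
     Gf g (\<nu> i + \<kappa> / real N * (\<Sum>k=1..N. Psi \<alpha> (Q k t - Q i t)))"

definition vel :: "(real \<Rightarrow> real) \<Rightarrow> real \<Rightarrow> real" where
  "vel f t = vector_derivative f (at t within {0..})"

definition is_classical_solution :: "(real \<Rightarrow> real) \<Rightarrow> real \<Rightarrow> real \<Rightarrow> nat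
     \<Rightarrow> (nat \<Rightarrow> real) \<Rightarrow> (nat \<Rightarrow> real) \<Rightarrow> (nat \<Rightarrow> real \<Rightarrow> real) \<Rightarrow> bool" where
  "is_classical_solution g \<kappa> \<alpha> N q0 \<nu> Q \<longleftrightarrow>
     (\<forall>i\<in>{1..N}. Q i 0 = q0 i
        \<and> (\<forall>t\<ge>0. (Q i has_real_derivative rhs g \<kappa> \<alpha> N \<nu> Q i t) (at t within {0..}))
        \<and> continuous_on {0..} (vel (Q i)))"

definition collide :: "(nat \<Rightarrow> real \<Rightarrow> real) \<Rightarrow> nat \<Rightarrow> nat \<Rightarrow> real \<Rightarrow> bool" where
  "collide Q i j t \<longleftrightarrow> Q i t = Q j t \<and> vel (Q i) t \<noteq> vel (Q j) t"

definition stick :: "(nat \<Rightarrow> real \<Rightarrow> real) \<Rightarrow> nat \<Rightarrow> nat \<Rightarrow> real \<Rightarrow> bool" where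
  "stick Q i j t \<longleftrightarrow> Q i t = Q j t \<and> vel (Q i) t = vel (Q j) t"

definition Cset :: "nat \<Rightarrow> (nat \<Rightarrow> real \<Rightarrow> real) \<Rightarrow> nat \<Rightarrow> real \<Rightarrow> nat set" where
  "Cset N Q i t = {j\<in>{1..N}. collide Q i j t}"

definition Sset :: "nat \<Rightarrow> (nat \<Rightarrow> real \<Rightarrow> real) \<Rightarrow> nat \<Rightarrow> real \<Rightarrow> nat set" where
  "Sset N Q i t = {j\<in>{1..N}. stick Q i j t}"

definition Tset :: "nat \<Rightarrow> (nat \<Rightarrow> real \<Rightarrow> real) \<Rightarrow> real set" where
  "Tset N Q = (\<Union>i\<in>{1..N}.
      {t. t > 0 \<and> card (Cset N Q i t) \<noteq> 0}
    \<union> {t. t > 0 \<and> \<not> continuous (at t within {0<..}) (\<lambda>s. real (card (Sset N Q i s)))})"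

end

theory Submission
  imports Defs
begin

(* The velocity field is not Lipschitz, since Psi is only Hoelder continuous at 0, but it is
   dissipative for the maximum: if x - y is maximal in component p, then x k - x p <= y k - y p for
   all k, and monotonicity of Psi and G gives F x p <= F y p.  A comparison principle for right
   derivatives then bounds max_i (x_i - y_i) for two eps-approximate solutions by its initial value
   plus 2 eps t.  With eps = 0 this is uniqueness; for Euler polygons with shrinking step it shows
   that they form a uniformly Cauchy sequence, whose limit is a solution.  (The field is clamped
   first to make it bounded; a priori bounds on the spread of the particles show that the clamp is
   never active.)
   The same comparison makes |q_i - q_j| nonincreasing when nu_i = nu_j, so such particles stick
   once they meet.  When nu_i < nu_j, the derivative of q_j - q_i is positive at each of its zeros,
   so the two particles meet at most once.  Hence there are finitely many collisions, S_i only grows,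
   and |S_i| can only jump when i first meets a particle with the same nu. *)

section \<open>Comparison principle for right derivatives\<close>

lemma eventually_at_right_le:
  fixes \<phi> :: "real \<Rightarrow> real"
  assumes cont: "continuous_on {a..b} \<phi>" and s: "a \<le> s" "s < b" and le: "\<phi> s \<le> M"
    and at_eq: "\<phi> s = M \<Longrightarrow> \<exists>d<0. (\<phi> has_real_derivative d) (at s within {s..b})"
  shows "\<forall>\<^sub>F x in at_right s. \<phi> x \<le> M"
proof (cases "\<phi> s < M")
  case True
  have "(\<phi> \<longlongrightarrow> \<phi> s) (at s within {a..b})"
    using cont s by (simp add: continuous_on_def)
  then have "\<forall>\<^sub>F x in at s within {a..b}. \<phi> x < M"
    using True by (rule order_tendstoD)
  then have "\<forall>\<^sub>F x in at s within {s..b}. \<phi> x < M"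
    by (rule filter_leD[rotated]) (use s in \<open>auto intro: at_le\<close>)
  then show ?thesis
    using s by (auto simp: at_within_Icc_at_right elim: eventually_mono)
next
  case False
  then obtain d where "d < 0" "(\<phi> has_real_derivative d) (at s within {s..b})"
    using at_eq le by force
  then obtain e where
    e: "e > 0" "\<And>h. h > 0 \<Longrightarrow> s + h \<in> {s..b} \<Longrightarrow> h < e \<Longrightarrow> \<phi> (s + h) < \<phi> s"
    using has_real_derivative_neg_dec_right by blast
  show ?thesis unfolding eventually_at_right_field
  proof (intro exI[of _ "min (s + e) b"] conjI allI impI)
    show "s < min (s + e) b" using e s by auto
    fix y assume "s < y" "y < min (s + e) b"
    then show "\<phi> y \<le> M" using e(2)[of "y - s"] le by auto
  qed
qed

text \<open>At the first time the bound fails, some maximal \<open>D k\<close> would have to grow faster than \<open>\<eta> + \<epsilon>\<close>.\<close>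
lemma family_growth_le_eps:
  fixes D d :: "'i \<Rightarrow> real \<Rightarrow> real"
  assumes fin: "finite I" and eps: "\<epsilon> > 0"
    and cont: "\<And>i. i \<in> I \<Longrightarrow> continuous_on {a..b} (D i)"
    and der: "\<And>i t. i \<in> I \<Longrightarrow> t \<in> {a..<b} \<Longrightarrow> (D i has_real_derivative d i t) (at t within {t..b})"
    and at_max: "\<And>p t. p \<in> I \<Longrightarrow> t \<in> {a..<b} \<Longrightarrow> (\<And>k. k \<in> I \<Longrightarrow> D k t \<le> D p t) \<Longrightarrow> d p t \<le> \<eta>"
    and init: "\<And>i. i \<in> I \<Longrightarrow> D i a \<le> M0"
    and i: "i \<in> I" and t: "t \<in> {a..b}"
  shows "D i t \<le> M0 + (\<eta> + \<epsilon>) * (t - a)"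
proof (rule ccontr)
  assume violated: "\<not> ?thesis"
  define \<phi> where "\<phi> k x = D k x - (\<eta> + \<epsilon>) * (x - a)" for k x
  define S where "S = {x \<in> {a..t}. \<forall>k\<in>I. \<phi> k x \<le> M0}"
  have cont_\<phi>: "continuous_on {a..b} (\<phi> k)" if "k \<in> I" for k
    unfolding \<phi>_def using cont[OF that] by (intro continuous_intros)
  have "closed S"
  proof -
    have "S = {a..t} \<inter> (\<Inter>k\<in>I. {a..t} \<inter> \<phi> k -` {..M0})"
      unfolding S_def by auto
    moreover have "closed ({a..t} \<inter> \<phi> k -` {..M0})" if "k \<in> I" for k
      using continuous_on_subset[OF cont_\<phi>[OF that], of "{a..t}"] t by (intro continuous_closed_preimage) auto
    ultimately show ?thesis by (metis closed_INT closed_Int closed_atLeastAtMost)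
  qed
  moreover have "a \<in> S" and "S \<subseteq> {a..t}"
    using init t unfolding S_def \<phi>_def by auto
  ultimately have s: "Sup S \<in> S" "bdd_above S"
    using closed_contains_Sup[of S] bdd_above_mono[of "{a..t}" S] by auto
  define s where "s = Sup S"
  have "t \<notin> S" using violated i unfolding S_def \<phi>_def by (auto simp: algebra_simps)
  then have st: "a \<le> s" "s < t"
    using s \<open>S \<subseteq> {a..t}\<close> unfolding s_def by (auto simp: order.order_iff_strict)
  have "\<forall>\<^sub>F x in at_right s. \<phi> k x \<le> M0" if k: "k \<in> I" for k
  proof (rule eventually_at_right_le[OF cont_\<phi>[OF k]])
    show "a \<le> s" "s < b" "\<phi> k s \<le> M0"
      using st t s k unfolding S_def s_def by auto
    assume "\<phi> k s = M0"
    then have "D j s \<le> D k s" if "j \<in> I" for j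
      using s that unfolding S_def s_def \<phi>_def by auto
    then have "d k s - (\<eta> + \<epsilon>) < 0"
      using at_max[OF k] st t eps by force
    moreover have "(\<phi> k has_real_derivative d k s - (\<eta> + \<epsilon>)) (at s within {s..b})"
      unfolding \<phi>_def using der[OF k] st t by (auto intro!: derivative_eq_intros)
    ultimately show "\<exists>d<0. (\<phi> k has_real_derivative d) (at s within {s..b})"
      by blast
  qed
  then have "\<forall>\<^sub>F x in at_right s. \<forall>k\<in>I. \<phi> k x \<le> M0"
    using fin by (simp add: eventually_ball_finite)
  then obtain c where c: "c > s" "\<And>y. s < y \<Longrightarrow> y < c \<Longrightarrow> \<forall>k\<in>I. \<phi> k y \<le> M0"
    unfolding eventually_at_right_field by auto
  have "(s + min c t) / 2 \<in> S"
    using c st unfolding S_def by auto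
  then have "(s + min c t) / 2 \<le> s"
    unfolding s_def using cSup_upper[OF _ s(2)] by blast
  then show False using c st by auto
qed

lemma family_growth_le:
  fixes D d :: "'i \<Rightarrow> real \<Rightarrow> real"
  assumes fin: "finite I"
    and cont: "\<And>i. i \<in> I \<Longrightarrow> continuous_on {a..b} (D i)"
    and der: "\<And>i t. i \<in> I \<Longrightarrow> t \<in> {a..<b} \<Longrightarrow> (D i has_real_derivative d i t) (at t within {t..b})"
    and at_max: "\<And>p t. p \<in> I \<Longrightarrow> t \<in> {a..<b} \<Longrightarrow> (\<And>k. k \<in> I \<Longrightarrow> D k t \<le> D p t) \<Longrightarrow> d p t \<le> \<eta>"
    and init: "\<And>i. i \<in> I \<Longrightarrow> D i a \<le> M0"
    and i: "i \<in> I" and t: "t \<in> {a..b}"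
  shows "D i t \<le> M0 + \<eta> * (t - a)"
proof (rule field_le_epsilon)
  fix e :: real assume "0 < e"
  define \<epsilon> where "\<epsilon> = e / (t - a + 1)"
  have "\<epsilon> > 0" "\<epsilon> * (t - a) \<le> e"
    using \<open>0 < e\<close> t by (auto simp: \<epsilon>_def field_simps)
  moreover have "D i t \<le> M0 + (\<eta> + \<epsilon>) * (t - a)"
    using family_growth_le_eps[OF fin \<open>\<epsilon> > 0\<close> cont der at_max init i t] .
  ultimately show "D i t \<le> M0 + \<eta> * (t - a) + e"
    by (simp add: algebra_simps)
qed

lemma right_deriv_le_imp_growth_le:
  fixes f f' :: "real \<Rightarrow> real"
  assumes "a \<le> b" and "continuous_on {a..b} f"
    and "\<And>t. t \<in> {a..<b} \<Longrightarrow> (f has_real_derivative f' t) (at t within {t..b})"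
    and "\<And>t. t \<in> {a..<b} \<Longrightarrow> f' t \<le> \<eta>"
  shows "f b \<le> f a + \<eta> * (b - a)"
  using family_growth_le[of "{()}" a b "\<lambda>_. f" "\<lambda>_. f'" \<eta> "f a"] assms by auto

lemma right_deriv_near_const_increment:
  fixes f f' :: "real \<Rightarrow> real"
  assumes ab: "a \<le> b" and cont: "continuous_on {a..b} f"
    and der: "\<And>t. t \<in> {a..<b} \<Longrightarrow> (f has_real_derivative f' t) (at t within {t..b})"
    and near: "\<And>t. t \<in> {a..<b} \<Longrightarrow> \<bar>f' t - c\<bar> \<le> \<eta>"
  shows "\<bar>f b - f a - c * (b - a)\<bar> \<le> \<eta> * (b - a)"
proof -
  have "(\<lambda>t. \<sigma> * (f t - c * t)) b \<le> (\<lambda>t. \<sigma> * (f t - c * t)) a + \<eta> * (b - a)"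
    if "\<sigma> \<in> {1, -1}" for \<sigma>
  proof (rule right_deriv_le_imp_growth_le[OF ab])
    show "continuous_on {a..b} (\<lambda>t. \<sigma> * (f t - c * t))"
      using cont by (intro continuous_intros)
    show "((\<lambda>t. \<sigma> * (f t - c * t)) has_real_derivative \<sigma> * (f' t - c)) (at t within {t..b})"
      if "t \<in> {a..<b}" for t
      using der[OF that] by (auto intro!: derivative_eq_intros)
    show "\<sigma> * (f' t - c) \<le> \<eta>" if "t \<in> {a..<b}" for t
      using near[OF that] \<open>\<sigma> \<in> {1, -1}\<close> by auto
  qed
  from this[of 1] this[of "-1"] show ?thesis
    by (simp add: abs_le_iff algebra_simps)
qed

lemma abs_le_if_right_deriv_toward_zero:
  fixes h h' :: "real \<Rightarrow> real"
  assumes "a \<le> b" and "continuous_on {a..b} h"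
    and "\<And>t. t \<in> {a..<b} \<Longrightarrow> (h has_real_derivative h' t) (at t within {t..b})"
    and "\<And>t. t \<in> {a..<b} \<Longrightarrow> 0 \<le> h t \<Longrightarrow> h' t \<le> 0"
    and "\<And>t. t \<in> {a..<b} \<Longrightarrow> h t \<le> 0 \<Longrightarrow> 0 \<le> h' t"
  shows "\<bar>h b\<bar> \<le> \<bar>h a\<bar>"
proof -
  define D where "D \<sigma> t = (if \<sigma> then h t else - h t)" for \<sigma> t
  have "D \<sigma> b \<le> \<bar>h a\<bar> + 0 * (b - a)" for \<sigma>
  proof (rule family_growth_le[where I = UNIV and d = "\<lambda>\<sigma> t. if \<sigma> then h' t else - h' t"])
    show "continuous_on {a..b} (D \<sigma>)" for \<sigma>
      unfolding D_def using assms(2) by (cases \<sigma>) (auto intro: continuous_intros)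
    show "(D \<sigma> has_real_derivative (if \<sigma> then h' t else - h' t)) (at t within {t..b})"
      if "t \<in> {a..<b}" for \<sigma> t
      unfolding D_def using assms(3)[OF that] by (auto intro: derivative_intros)
    show "(if p then h' t else - h' t) \<le> 0"
      if "t \<in> {a..<b}" "\<And>k. k \<in> UNIV \<Longrightarrow> D k t \<le> D p t" for p t
      using that(2)[of "\<not> p"] assms(4,5)[OF that(1)] unfolding D_def by (cases p) auto
  qed (use assms(1) in \<open>auto simp: D_def\<close>)
  from this[of True] this[of False] show ?thesis
    unfolding D_def by auto
qed

definition max_dissipative :: "'i set \<Rightarrow> (('i \<Rightarrow> real) \<Rightarrow> 'i \<Rightarrow> real) \<Rightarrow> bool" where
  "max_dissipative I F \<longleftrightarrow>
     (\<forall>x y p. p \<in> I \<longrightarrow> (\<forall>k\<in>I. x k - y k \<le> x p - y p) \<longrightarrow> F x p \<le> F y p)"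

lemma max_dissipativeD:
  "max_dissipative I F \<Longrightarrow> p \<in> I \<Longrightarrow> (\<And>k. k \<in> I \<Longrightarrow> x k - y k \<le> x p - y p) \<Longrightarrow> F x p \<le> F y p"
  unfolding max_dissipative_def by blast

lemma approx_solutions_diff_le:
  fixes X Y dX dY :: "'i \<Rightarrow> real \<Rightarrow> real"
  assumes fin: "finite I" and diss: "max_dissipative I F"
    and cont_X: "\<And>i. i \<in> I \<Longrightarrow> continuous_on {a..b} (X i)"
    and der_X: "\<And>i t. i \<in> I \<Longrightarrow> t \<in> {a..<b} \<Longrightarrow> (X i has_real_derivative dX i t) (at t within {t..b})"
    and defect_X: "\<And>i t. i \<in> I \<Longrightarrow> t \<in> {a..<b} \<Longrightarrow> \<bar>dX i t - F (\<lambda>k. X k t) i\<bar> \<le> \<epsilon>"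
    and cont_Y: "\<And>i. i \<in> I \<Longrightarrow> continuous_on {a..b} (Y i)"
    and der_Y: "\<And>i t. i \<in> I \<Longrightarrow> t \<in> {a..<b} \<Longrightarrow> (Y i has_real_derivative dY i t) (at t within {t..b})"
    and defect_Y: "\<And>i t. i \<in> I \<Longrightarrow> t \<in> {a..<b} \<Longrightarrow> \<bar>dY i t - F (\<lambda>k. Y k t) i\<bar> \<le> \<epsilon>"
    and init: "\<And>i. i \<in> I \<Longrightarrow> X i a - Y i a \<le> M0"
    and i: "i \<in> I" and t: "t \<in> {a..b}"
  shows "X i t - Y i t \<le> M0 + 2 * \<epsilon> * (t - a)"
proof (rule family_growth_le[where D = "\<lambda>i t. X i t - Y i t" and d = "\<lambda>i t. dX i t - dY i t",
      OF fin _ _ _ init i t])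
  show "continuous_on {a..b} (\<lambda>t. X i t - Y i t)" if "i \<in> I" for i
    using cont_X[OF that] cont_Y[OF that] by (intro continuous_intros)
  show "((\<lambda>t. X i t - Y i t) has_real_derivative dX i t - dY i t) (at t within {t..b})"
    if "i \<in> I" "t \<in> {a..<b}" for i t
    using der_X[OF that] der_Y[OF that] by (intro derivative_intros)
  show "dX p t - dY p t \<le> 2 * \<epsilon>"
    if p: "p \<in> I" and "t \<in> {a..<b}" and "\<And>k. k \<in> I \<Longrightarrow> X k t - Y k t \<le> X p t - Y p t" for p t
  proof -
    have "F (\<lambda>k. X k t) p \<le> F (\<lambda>k. Y k t) p"
      using max_dissipativeD[OF diss p, of "\<lambda>k. X k t" "\<lambda>k. Y k t"] that(3) by simp
    then show ?thesis
      using defect_X[OF p that(2)] defect_Y[OF p that(2)] by (simp add: abs_le_iff)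
  qed
qed

lemma dissipative_solutions_unique:
  fixes X Y :: "'i \<Rightarrow> real \<Rightarrow> real"
  assumes fin: "finite I" and diss: "max_dissipative I F"
    and X: "\<And>i t. i \<in> I \<Longrightarrow> t \<in> {a..b} \<Longrightarrow> (X i has_real_derivative F (\<lambda>k. X k t) i) (at t within {a..b})"
    and Y: "\<And>i t. i \<in> I \<Longrightarrow> t \<in> {a..b} \<Longrightarrow> (Y i has_real_derivative F (\<lambda>k. Y k t) i) (at t within {a..b})"
    and init: "\<And>i. i \<in> I \<Longrightarrow> X i a = Y i a"
    and i: "i \<in> I" and t: "t \<in> {a..b}"
  shows "X i t = Y i t"
proof -
  have le: "Z i t - Z' i t \<le> 0 + 2 * 0 * (t - a)"
    if Z: "\<And>i t. i \<in> I \<Longrightarrow> t \<in> {a..b} \<Longrightarrow> (Z i has_real_derivative F (\<lambda>k. Z k t) i) (at t within {a..b})"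
      and Z': "\<And>i t. i \<in> I \<Longrightarrow> t \<in> {a..b} \<Longrightarrow> (Z' i has_real_derivative F (\<lambda>k. Z' k t) i) (at t within {a..b})"
      and "\<And>i. i \<in> I \<Longrightarrow> Z i a = Z' i a"
    for Z Z' :: "'i \<Rightarrow> real \<Rightarrow> real"
  proof (rule approx_solutions_diff_le[OF fin diss _ _ _ _ _ _ _ i t])
    show "continuous_on {a..b} (Z i)" if "i \<in> I" for i
      by (rule DERIV_continuous_on[OF Z[OF that]])
    show "continuous_on {a..b} (Z' i)" if "i \<in> I" for i
      by (rule DERIV_continuous_on[OF Z'[OF that]])
    show "(Z i has_real_derivative F (\<lambda>k. Z k t) i) (at t within {t..b})"
      if "i \<in> I" "t \<in> {a..<b}" for i t
      by (rule has_field_derivative_subset[OF Z[OF that(1), of t]]) (use that(2) in auto)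
    show "(Z' i has_real_derivative F (\<lambda>k. Z' k t) i) (at t within {t..b})"
      if "i \<in> I" "t \<in> {a..<b}" for i t
      by (rule has_field_derivative_subset[OF Z'[OF that(1), of t]]) (use that(2) in auto)
  qed (use \<open>\<And>i. i \<in> I \<Longrightarrow> Z i a = Z' i a\<close> in auto)
  show ?thesis
    using le[OF X Y init] le[OF Y X init[symmetric]] by simp
qed

lemma has_real_derivative_limit:
  fixes P p :: "nat \<Rightarrow> real \<Rightarrow> real"
  assumes cont: "\<And>m. continuous_on {a..b} (P m)"
    and der: "\<And>m \<tau>. \<tau> \<in> {a..<b} \<Longrightarrow> (P m has_real_derivative p m \<tau>) (at \<tau> within {\<tau>..b})"
    and lim: "\<And>\<tau>. \<tau> \<in> {a..b} \<Longrightarrow> (\<lambda>m. P m \<tau>) \<longlonglongrightarrow> Q \<tau>"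
    and unif: "uniform_limit {a..<b} p f sequentially"
    and cont_f: "continuous_on {a..b} f"
    and t: "t \<in> {a..b}"
  shows "(Q has_real_derivative f t) (at t within {a..b})"
  unfolding has_field_derivative_def has_derivative_within_alt
proof (intro conjI allI impI bounded_linear_mult_right)
  fix \<epsilon> :: real assume "\<epsilon> > 0"
  then obtain \<delta> where "\<delta> > 0" and \<delta>: "\<And>\<tau>. \<tau> \<in> {a..b} \<Longrightarrow> dist \<tau> t < \<delta> \<Longrightarrow> dist (f \<tau>) (f t) < \<epsilon> / 2"
    using cont_f t unfolding continuous_on_iff by (metis half_gt_zero)
  have increment: "\<bar>Q v - Q u - f t * (v - u)\<bar> \<le> \<epsilon> * (v - u)"
    if uv: "u \<in> {a..b}" "v \<in> {a..b}" "u \<le> v" "\<And>\<tau>. \<tau> \<in> {u..<v} \<Longrightarrow> dist \<tau> t < \<delta>" for u v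
  proof -
    have "\<forall>\<^sub>F m in sequentially. \<forall>\<tau>\<in>{a..<b}. dist (p m \<tau>) (f \<tau>) < \<epsilon> / 2"
      using uniform_limitD[OF unif, of "\<epsilon> / 2"] \<open>\<epsilon> > 0\<close> by simp
    then have "\<forall>\<^sub>F m in sequentially. \<bar>P m v - P m u - f t * (v - u)\<bar> \<le> \<epsilon> * (v - u)"
    proof (rule eventually_mono)
      fix m assume close: "\<forall>\<tau>\<in>{a..<b}. dist (p m \<tau>) (f \<tau>) < \<epsilon> / 2"
      show "\<bar>P m v - P m u - f t * (v - u)\<bar> \<le> \<epsilon> * (v - u)"
      proof (rule right_deriv_near_const_increment[OF \<open>u \<le> v\<close>])
        show "continuous_on {u..v} (P m)"
          by (rule continuous_on_subset[OF cont]) (use uv in auto)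
        fix \<tau> assume \<tau>: "\<tau> \<in> {u..<v}"
        then have "\<tau> \<in> {a..<b}" using uv by auto
        show "(P m has_real_derivative p m \<tau>) (at \<tau> within {\<tau>..v})"
          by (rule has_field_derivative_subset[OF der[OF \<open>\<tau> \<in> {a..<b}\<close>]]) (use \<tau> uv in auto)
        have "\<bar>p m \<tau> - f \<tau>\<bar> < \<epsilon> / 2"
          using close \<open>\<tau> \<in> {a..<b}\<close> by (auto simp: dist_real_def)
        moreover have "\<bar>f \<tau> - f t\<bar> < \<epsilon> / 2"
          using \<delta>[of \<tau>] uv(4)[OF \<tau>] \<open>\<tau> \<in> {a..<b}\<close> by (simp add: dist_real_def)
        ultimately show "\<bar>p m \<tau> - f t\<bar> \<le> \<epsilon>"
          by linarith
      qed
    qed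
    moreover have "(\<lambda>m. \<bar>P m v - P m u - f t * (v - u)\<bar>) \<longlonglongrightarrow> \<bar>Q v - Q u - f t * (v - u)\<bar>"
      using lim uv by (intro tendsto_intros)
    ultimately show ?thesis
      by (intro tendsto_upperbound[OF _ _ sequentially_bot]) auto
  qed
  show "\<exists>d>0. \<forall>y\<in>{a..b}. norm (y - t) < d \<longrightarrow> norm (Q y - Q t - f t * (y - t)) \<le> \<epsilon> * norm (y - t)"
  proof (intro exI[of _ \<delta>] conjI ballI impI)
    fix y assume "y \<in> {a..b}" "norm (y - t) < \<delta>"
    then show "norm (Q y - Q t - f t * (y - t)) \<le> \<epsilon> * norm (y - t)"
      using increment[of t y] increment[of y t] t
      by (cases "t \<le> y") (auto simp: dist_real_def abs_minus_commute algebra_simps)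
  qed (rule \<open>\<delta> > 0\<close>)
qed

section \<open>Euler polygons of a bounded dissipative field\<close>

primrec euler_node :: "(('i \<Rightarrow> real) \<Rightarrow> 'i \<Rightarrow> real) \<Rightarrow> ('i \<Rightarrow> real) \<Rightarrow> real \<Rightarrow> nat \<Rightarrow> 'i \<Rightarrow> real" where
  "euler_node F q0 h 0 = q0"
| "euler_node F q0 h (Suc n) = (\<lambda>i. euler_node F q0 h n i + h * F (euler_node F q0 h n) i)"

text \<open>The \<open>n\<close>-th summand is the displacement during the \<open>n\<close>-th Euler step, so for \<open>t < K h\<close>
  this is the piecewise linear interpolation of the nodes; in this form it is evidently continuous.\<close>
definition euler_polygon ::
    "(('i \<Rightarrow> real) \<Rightarrow> 'i \<Rightarrow> real) \<Rightarrow> ('i \<Rightarrow> real) \<Rightarrow> real \<Rightarrow> nat \<Rightarrow> real \<Rightarrow> 'i \<Rightarrow> real" where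
  "euler_polygon F q0 h K t i =
     q0 i + (\<Sum>n<K. F (euler_node F q0 h n) i * min h (max 0 (t - real n * h)))"

lemma euler_node_eq_sum: "euler_node F q0 h n i = q0 i + h * (\<Sum>m<n. F (euler_node F q0 h m) i)"
  by (induction n) (auto simp: algebra_simps)

lemma euler_node_drift:
  assumes "\<And>x. \<bar>F x i\<bar> \<le> V" and "0 \<le> h"
  shows "\<bar>euler_node F q0 h n i - q0 i\<bar> \<le> V * (real n * h)"
proof -
  have "\<bar>\<Sum>m<n. F (euler_node F q0 h m) i\<bar> \<le> (\<Sum>m<n. \<bar>F (euler_node F q0 h m) i\<bar>)"
    by (rule sum_abs)
  also have "\<dots> \<le> (\<Sum>m<n. V)"
    using assms(1) by (intro sum_mono)
  finally have "\<bar>\<Sum>m<n. F (euler_node F q0 h m) i\<bar> \<le> real n * V"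
    by simp
  from mult_left_mono[OF this \<open>0 \<le> h\<close>] show ?thesis
    using \<open>0 \<le> h\<close> by (simp add: euler_node_eq_sum abs_mult algebra_simps)
qed

lemma euler_polygon_on_cell:
  assumes h: "0 < h" and cell: "real n * h \<le> t" "t < (real n + 1) * h" and "n < K"
  shows "euler_polygon F q0 h K t i =
    euler_node F q0 h n i + (t - real n * h) * F (euler_node F q0 h n) i"
proof -
  define w where "w m = min h (max 0 (t - real m * h))" for m
  have "w m = h" if "m < n" for m
  proof -
    have "(real m + 1) * h \<le> real n * h"
      using that h by (intro mult_right_mono) auto
    then show ?thesis using cell unfolding w_def by (simp add: algebra_simps)
  qed
  moreover have "w m = 0" if "n < m" for m
  proof -
    have "(real n + 1) * h \<le> real m * h"
      using that h by (intro mult_right_mono) auto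
    then have "t - real m * h < 0"
      using cell by linarith
    then show ?thesis using h unfolding w_def by simp
  qed
  moreover have "w n = t - real n * h"
    using cell unfolding w_def by (simp add: algebra_simps)
  ultimately have "(\<Sum>m<K. F (euler_node F q0 h m) i * w m)
      = (\<Sum>m<n. F (euler_node F q0 h m) i * h) + F (euler_node F q0 h n) i * (t - real n * h)"
    using \<open>n < K\<close> by (subst sum.mono_neutral_right[of "{..<K}" "{..<Suc n}"]) auto
  then show ?thesis
    unfolding euler_polygon_def euler_node_eq_sum[of F q0 h n] w_def[symmetric]
    by (simp add: sum_distrib_left sum_distrib_right algebra_simps)
qed

lemma euler_polygon_continuous: "continuous_on S (\<lambda>t. euler_polygon F q0 h K t i)"
  unfolding euler_polygon_def by (intro continuous_intros)

lemma euler_polygon_0: "0 \<le> h \<Longrightarrow> euler_polygon F q0 h K 0 i = q0 i"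
  unfolding euler_polygon_def by (simp add: min_def)

lemma euler_polygon_right_deriv:
  assumes h: "0 < h" and cell: "real n * h \<le> t" "t < (real n + 1) * h" and "n < K"
  shows "((\<lambda>t. euler_polygon F q0 h K t i) has_real_derivative F (euler_node F q0 h n) i)
    (at t within {t..})"
proof -
  have "((\<lambda>s. euler_node F q0 h n i + (s - real n * h) * F (euler_node F q0 h n) i)
      has_real_derivative F (euler_node F q0 h n) i) (at t within {t..})"
    by (auto intro!: derivative_eq_intros)
  then show ?thesis
  proof (rule has_field_derivative_transform_within)
    show "0 < (real n + 1) * h - t" using cell by simp
    show "euler_node F q0 h n i + (s - real n * h) * F (euler_node F q0 h n) i =
        euler_polygon F q0 h K s i" if "s \<in> {t..}" "dist s t < (real n + 1) * h - t" for s
    proof -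
      have "real n * h \<le> s" "s < (real n + 1) * h"
        using that cell by (auto simp: dist_real_def)
      from euler_polygon_on_cell[OF h this \<open>n < K\<close>, of F q0 i] show ?thesis by simp
    qed
  qed auto
qed

locale dissipative_ivp =
  fixes I :: "'i set" and F :: "('i \<Rightarrow> real) \<Rightarrow> 'i \<Rightarrow> real" and q0 :: "'i \<Rightarrow> real" and T V :: real
  assumes finite_I: "finite I" and T_pos: "0 < T"
    and F_bounded: "\<And>x i. \<bar>F x i\<bar> \<le> V"
    and F_uniformly_continuous: "\<And>\<epsilon>. 0 < \<epsilon> \<Longrightarrow> \<exists>\<delta>>0. \<forall>x y.
          (\<forall>k\<in>I. \<bar>x k - q0 k\<bar> \<le> V * T \<and> \<bar>y k - q0 k\<bar> \<le> V * T \<and> \<bar>x k - y k\<bar> \<le> \<delta>)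
          \<longrightarrow> (\<forall>i\<in>I. \<bar>F x i - F y i\<bar> \<le> \<epsilon>)"
    and F_dissipative: "max_dissipative I F"
begin

lemma V_nonneg: "0 \<le> V"
  using F_bounded[of undefined undefined] by linarith

definition step :: "nat \<Rightarrow> real" where
  "step m = 1 / (real m + 1)"

definition cell :: "nat \<Rightarrow> real \<Rightarrow> nat" where
  "cell m t = nat \<lfloor>t / step m\<rfloor>"

definition polygon :: "nat \<Rightarrow> real \<Rightarrow> 'i \<Rightarrow> real" where
  "polygon m = euler_polygon F q0 (step m) (nat \<lceil>T / step m\<rceil> + 1)"

definition node :: "nat \<Rightarrow> real \<Rightarrow> 'i \<Rightarrow> real" where
  "node m t = euler_node F q0 (step m) (cell m t)"

lemma step_pos: "0 < step m"
  unfolding step_def by simp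

lemma eventually_step_small: "0 < \<delta> \<Longrightarrow> \<forall>\<^sub>F m in sequentially. V * step m < \<delta>"
proof -
  have "(\<lambda>m. V * step m) \<longlonglongrightarrow> V * 0"
    unfolding step_def using LIMSEQ_inverse_real_of_nat
    by (intro tendsto_mult_left) (simp add: inverse_eq_divide add.commute)
  then show "0 < \<delta> \<Longrightarrow> ?thesis" by (simp add: order_tendstoD)
qed

lemma cell_bounds:
  assumes "0 \<le> t"
  shows "real (cell m t) * step m \<le> t" "t < (real (cell m t) + 1) * step m"
proof -
  have "real (cell m t) = of_int \<lfloor>t / step m\<rfloor>"
    unfolding cell_def using assms step_pos[of m] by simp
  then show "real (cell m t) * step m \<le> t" "t < (real (cell m t) + 1) * step m"
    using floor_divide_lower[OF step_pos, of t m] floor_divide_upper[OF step_pos, of t m] by simp_all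
qed

lemma cell_lt: "t \<le> T \<Longrightarrow> cell m t < nat \<lceil>T / step m\<rceil> + 1"
proof -
  assume "t \<le> T"
  then have "\<lfloor>t / step m\<rfloor> \<le> \<lceil>T / step m\<rceil>"
    using step_pos[of m] by (meson divide_right_mono floor_le_ceiling floor_mono less_imp_le order_trans)
  then show ?thesis unfolding cell_def by linarith
qed

lemma polygon_eq_node:
  "t \<in> {0..T} \<Longrightarrow> polygon m t i = node m t i + (t - real (cell m t) * step m) * F (node m t) i"
  unfolding polygon_def node_def using cell_bounds cell_lt
  by (intro euler_polygon_on_cell step_pos) auto

lemma polygon_right_deriv:
  "t \<in> {0..<T} \<Longrightarrow> ((\<lambda>t. polygon m t i) has_real_derivative F (node m t) i) (at t within {t..T})"
  unfolding polygon_def node_def using cell_bounds cell_lt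
  by (intro has_field_derivative_subset[OF euler_polygon_right_deriv] step_pos) auto

lemma polygon_continuous: "continuous_on S (\<lambda>t. polygon m t i)"
  unfolding polygon_def by (rule euler_polygon_continuous)

lemma polygon_0: "polygon m 0 i = q0 i"
  unfolding polygon_def using step_pos by (intro euler_polygon_0 less_imp_le)

lemma node_drift_cell: "\<bar>node m t k - q0 k\<bar> \<le> V * (real (cell m t) * step m)"
  unfolding node_def
  by (rule euler_node_drift[where F = F and V = V]) (simp_all add: F_bounded less_imp_le[OF step_pos])

lemma node_drift: "0 \<le> t \<Longrightarrow> \<bar>node m t k - q0 k\<bar> \<le> V * t"
proof -
  assume "0 \<le> t"
  have "\<bar>node m t k - q0 k\<bar> \<le> V * (real (cell m t) * step m)"
    by (rule node_drift_cell)
  also have "\<dots> \<le> V * t"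
    using cell_bounds[OF \<open>0 \<le> t\<close>] V_nonneg by (intro mult_left_mono) auto
  finally show ?thesis .
qed

lemma polygon_near_node: "t \<in> {0..T} \<Longrightarrow> \<bar>polygon m t k - node m t k\<bar> \<le> V * step m"
proof -
  assume t: "t \<in> {0..T}"
  have "0 \<le> t - real (cell m t) * step m" "t - real (cell m t) * step m \<le> step m"
    using cell_bounds[of t m] t by (auto simp: algebra_simps)
  then have "\<bar>(t - real (cell m t) * step m) * F (node m t) k\<bar> \<le> step m * V"
    using F_bounded[of "node m t" k] by (simp add: abs_mult mult_mono)
  then show ?thesis
    using polygon_eq_node[OF t, of m k] by (simp add: mult.commute)
qed

lemma polygon_drift: "t \<in> {0..T} \<Longrightarrow> \<bar>polygon m t k - q0 k\<bar> \<le> V * t"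
proof -
  assume t: "t \<in> {0..T}"
  have "\<bar>(t - real (cell m t) * step m) * F (node m t) k\<bar> \<le> (t - real (cell m t) * step m) * V"
    using cell_bounds[of t m] t F_bounded[of "node m t" k] by (simp add: abs_mult mult_left_mono)
  moreover have "\<bar>node m t k - q0 k\<bar> \<le> V * (real (cell m t) * step m)"
    by (rule node_drift_cell)
  ultimately show ?thesis
    using polygon_eq_node[OF t, of m k] by (simp add: algebra_simps)
qed

lemma F_close_on_drift_box:
  assumes "0 < \<epsilon>"
  obtains \<delta> where "0 < \<delta>"
    "\<And>x y t i. t \<in> {0..T} \<Longrightarrow> i \<in> I \<Longrightarrow> (\<And>k. k \<in> I \<Longrightarrow> \<bar>x k - q0 k\<bar> \<le> V * t) \<Longrightarrow>
       (\<And>k. k \<in> I \<Longrightarrow> \<bar>y k - q0 k\<bar> \<le> V * t) \<Longrightarrow> (\<And>k. k \<in> I \<Longrightarrow> \<bar>x k - y k\<bar> \<le> \<delta>) \<Longrightarrow>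
       \<bar>F x i - F y i\<bar> \<le> \<epsilon>"
proof -
  obtain \<delta> where "0 < \<delta>" and \<delta>: "\<forall>x y. (\<forall>k\<in>I. \<bar>x k - q0 k\<bar> \<le> V * T \<and> \<bar>y k - q0 k\<bar> \<le> V * T \<and> \<bar>x k - y k\<bar> \<le> \<delta>)
      \<longrightarrow> (\<forall>i\<in>I. \<bar>F x i - F y i\<bar> \<le> \<epsilon>)"
    using F_uniformly_continuous[OF assms] by blast
  show ?thesis
  proof (rule that[OF \<open>0 < \<delta>\<close>])
    fix x y t i
    assume t: "t \<in> {0..T}" and "i \<in> I"
      and x: "\<And>k. k \<in> I \<Longrightarrow> \<bar>x k - q0 k\<bar> \<le> V * t" and y: "\<And>k. k \<in> I \<Longrightarrow> \<bar>y k - q0 k\<bar> \<le> V * t"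
      and xy: "\<And>k. k \<in> I \<Longrightarrow> \<bar>x k - y k\<bar> \<le> \<delta>"
    have "V * t \<le> V * T"
      using t V_nonneg by (simp add: mult_left_mono)
    then have "\<forall>k\<in>I. \<bar>x k - q0 k\<bar> \<le> V * T \<and> \<bar>y k - q0 k\<bar> \<le> V * T \<and> \<bar>x k - y k\<bar> \<le> \<delta>"
      using x y xy by force
    then show "\<bar>F x i - F y i\<bar> \<le> \<epsilon>"
      using \<delta> \<open>i \<in> I\<close> by blast
  qed
qed

lemma polygon_defect:
  assumes "0 < \<epsilon>"
  shows "\<forall>\<^sub>F m in sequentially. \<forall>t\<in>{0..T}. \<forall>i\<in>I. \<bar>F (node m t) i - F (polygon m t) i\<bar> \<le> \<epsilon>"
proof -
  obtain \<delta> where "0 < \<delta>" and \<delta>: "\<And>x y t i. t \<in> {0..T} \<Longrightarrow> i \<in> I \<Longrightarrow>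
       (\<And>k. k \<in> I \<Longrightarrow> \<bar>x k - q0 k\<bar> \<le> V * t) \<Longrightarrow> (\<And>k. k \<in> I \<Longrightarrow> \<bar>y k - q0 k\<bar> \<le> V * t) \<Longrightarrow>
       (\<And>k. k \<in> I \<Longrightarrow> \<bar>x k - y k\<bar> \<le> \<delta>) \<Longrightarrow> \<bar>F x i - F y i\<bar> \<le> \<epsilon>"
    using F_close_on_drift_box[OF assms] by metis
  show ?thesis
    using eventually_step_small[OF \<open>0 < \<delta>\<close>]
  proof (rule eventually_mono, intro ballI)
    fix m t i assume m: "V * step m < \<delta>" and t: "t \<in> {0..T}" and i: "i \<in> I"
    show "\<bar>F (node m t) i - F (polygon m t) i\<bar> \<le> \<epsilon>"
    proof (rule \<delta>[OF t i])
      show "\<bar>node m t k - q0 k\<bar> \<le> V * t" for k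
        using node_drift t by simp
      show "\<bar>polygon m t k - q0 k\<bar> \<le> V * t" for k
        using polygon_drift[OF t] .
      show "\<bar>node m t k - polygon m t k\<bar> \<le> \<delta>" for k
        using polygon_near_node[OF t, of m k] m by (simp add: abs_minus_commute)
    qed
  qed
qed

lemma polygon_uniformly_Cauchy: "uniformly_Cauchy_on ({0..T} \<times> I) (\<lambda>m (t, i). polygon m t i)"
proof (rule uniformly_Cauchy_onI)
  fix e :: real assume "0 < e"
  define \<epsilon> where "\<epsilon> = e / (4 * T)"
  have "0 < \<epsilon>" using \<open>0 < e\<close> T_pos unfolding \<epsilon>_def by simp
  then obtain M where M: "\<And>m t i. m \<ge> M \<Longrightarrow> t \<in> {0..T} \<Longrightarrow> i \<in> I \<Longrightarrow>
      \<bar>F (node m t) i - F (polygon m t) i\<bar> \<le> \<epsilon>"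
    using polygon_defect unfolding eventually_sequentially by meson
  have diff: "polygon m t i - polygon m' t i \<le> 0 + 2 * \<epsilon> * (t - 0)"
    if "m \<ge> M" "m' \<ge> M" "t \<in> {0..T}" "i \<in> I" for m m' t i
    by (rule approx_solutions_diff_le[OF finite_I F_dissipative, where X = "\<lambda>i t. polygon m t i"
          and Y = "\<lambda>i t. polygon m' t i" and dX = "\<lambda>i t. F (node m t) i" and dY = "\<lambda>i t. F (node m' t) i"])
      (use that polygon_continuous polygon_right_deriv polygon_0 M in auto)
  have half: "2 * \<epsilon> * t \<le> e / 2" if "t \<in> {0..T}" for t
    using that \<open>0 < \<epsilon>\<close> mult_left_mono[of t T "2 * \<epsilon>"] T_pos unfolding \<epsilon>_def by simp
  show "\<exists>M. \<forall>x\<in>{0..T} \<times> I. \<forall>m\<ge>M. \<forall>n\<ge>M.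
      dist ((\<lambda>(t, i). polygon m t i) x) ((\<lambda>(t, i). polygon n t i) x) < e"
  proof (intro exI[of _ M] ballI allI impI)
    fix x m n assume "x \<in> {0..T} \<times> I" "M \<le> m" "M \<le> n"
    then obtain t i where "x = (t, i)" "t \<in> {0..T}" "i \<in> I" by auto
    with diff[of m n t i] diff[of n m t i] half[of t] \<open>0 < e\<close> \<open>M \<le> m\<close> \<open>M \<le> n\<close>
    show "dist ((\<lambda>(t, i). polygon m t i) x) ((\<lambda>(t, i). polygon n t i) x) < e"
      by (simp add: dist_real_def abs_less_iff)
  qed
qed

definition solution :: "'i \<Rightarrow> real \<Rightarrow> real" where
  "solution i t = lim (\<lambda>m. polygon m t i)"

lemma polygon_uniform_limit:
  "uniform_limit ({0..T} \<times> I) (\<lambda>m (t, i). polygon m t i) (\<lambda>(t, i). solution i t) sequentially"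
proof -
  obtain l where l: "uniform_limit ({0..T} \<times> I) (\<lambda>m (t, i). polygon m t i) l sequentially"
    using Cauchy_uniformly_convergent[OF polygon_uniformly_Cauchy]
    unfolding uniformly_convergent_on_def by blast
  have "l x = (\<lambda>(t, i). solution i t) x" if "x \<in> {0..T} \<times> I" for x
    using tendsto_uniform_limitI[OF l that] unfolding solution_def by (auto simp: limI split: prod.splits)
  then have "uniform_limit ({0..T} \<times> I) (\<lambda>m (t, i). polygon m t i) l sequentially \<longleftrightarrow> ?thesis"
    by (intro uniform_limit_cong') auto
  with l show ?thesis by simp
qed

lemma polygon_tendsto: "t \<in> {0..T} \<Longrightarrow> i \<in> I \<Longrightarrow> (\<lambda>m. polygon m t i) \<longlonglongrightarrow> solution i t"
  using tendsto_uniform_limitI[OF polygon_uniform_limit, of "(t, i)"] by simp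

lemma solution_0: "i \<in> I \<Longrightarrow> solution i 0 = q0 i"
  using polygon_tendsto[of 0 i] T_pos by (simp add: polygon_0 LIMSEQ_const_iff)

lemma solution_drift: "t \<in> {0..T} \<Longrightarrow> k \<in> I \<Longrightarrow> \<bar>solution k t - q0 k\<bar> \<le> V * t"
  using polygon_drift polygon_tendsto
  by (intro tendsto_upperbound[OF _ _ sequentially_bot, of "\<lambda>m. \<bar>polygon m t k - q0 k\<bar>"])
    (auto intro!: tendsto_intros)

lemma solution_lipschitz:
  assumes "s \<in> {0..T}" "t \<in> {0..T}" "s \<le> t" "i \<in> I"
  shows "\<bar>solution i t - solution i s\<bar> \<le> V * (t - s)"
proof -
  have "\<bar>polygon m t i - polygon m s i - 0 * (t - s)\<bar> \<le> V * (t - s)" for m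
  proof (rule right_deriv_near_const_increment[OF \<open>s \<le> t\<close> polygon_continuous])
    fix \<tau> assume "\<tau> \<in> {s..<t}"
    then have "\<tau> \<in> {0..<T}" using assms by auto
    show "((\<lambda>t. polygon m t i) has_real_derivative F (node m \<tau>) i) (at \<tau> within {\<tau>..t})"
      by (rule has_field_derivative_subset[OF polygon_right_deriv[OF \<open>\<tau> \<in> {0..<T}\<close>]])
        (use assms in auto)
    show "\<bar>F (node m \<tau>) i - 0\<bar> \<le> V"
      using F_bounded by simp
  qed
  then show ?thesis
    using assms polygon_tendsto
    by (intro tendsto_upperbound[OF _ _ sequentially_bot, of "\<lambda>m. \<bar>polygon m t i - polygon m s i\<bar>"])
      (auto intro!: tendsto_intros)
qed

lemma F_solution_continuous: "i \<in> I \<Longrightarrow> continuous_on {0..T} (\<lambda>t. F (\<lambda>k. solution k t) i)"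
  unfolding continuous_on_iff
proof (intro ballI allI impI)
  fix t e :: real assume "i \<in> I" "t \<in> {0..T}" "0 < e"
  then obtain \<delta> where "0 < \<delta>" and \<delta>: "\<And>x y t i. t \<in> {0..T} \<Longrightarrow> i \<in> I \<Longrightarrow>
       (\<And>k. k \<in> I \<Longrightarrow> \<bar>x k - q0 k\<bar> \<le> V * t) \<Longrightarrow> (\<And>k. k \<in> I \<Longrightarrow> \<bar>y k - q0 k\<bar> \<le> V * t) \<Longrightarrow>
       (\<And>k. k \<in> I \<Longrightarrow> \<bar>x k - y k\<bar> \<le> \<delta>) \<Longrightarrow> \<bar>F x i - F y i\<bar> \<le> e / 2"
    using F_close_on_drift_box[of "e / 2"] by (metis half_gt_zero)
  show "\<exists>d>0. \<forall>s\<in>{0..T}. dist s t < d \<longrightarrow> dist (F (\<lambda>k. solution k s) i) (F (\<lambda>k. solution k t) i) < e"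
  proof (intro exI[of _ "\<delta> / (V + 1)"] conjI ballI impI)
    show "0 < \<delta> / (V + 1)" using \<open>0 < \<delta>\<close> V_nonneg by simp
    fix s assume s: "s \<in> {0..T}" "dist s t < \<delta> / (V + 1)"
    have "V * \<bar>s - t\<bar> \<le> \<delta>"
      using s V_nonneg \<open>0 < \<delta>\<close> by (simp add: dist_real_def field_simps)
    then have "\<bar>solution k s - solution k t\<bar> \<le> \<delta>" if "k \<in> I" for k
      using solution_lipschitz[OF s(1) \<open>t \<in> {0..T}\<close> _ that] solution_lipschitz[OF \<open>t \<in> {0..T}\<close> s(1) _ that]
      by (cases "s \<le> t") (auto simp: abs_minus_commute)
    moreover have "\<bar>solution k \<tau> - q0 k\<bar> \<le> V * max s t" if "k \<in> I" "\<tau> \<in> {s, t}" for k \<tau>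
      using order_trans[OF solution_drift[of \<tau> k] mult_left_mono[of \<tau> "max s t" V]]
        that s \<open>t \<in> {0..T}\<close> V_nonneg by auto
    ultimately have "\<bar>F (\<lambda>k. solution k s) i - F (\<lambda>k. solution k t) i\<bar> \<le> e / 2"
      using s \<open>i \<in> I\<close> \<open>t \<in> {0..T}\<close> by (intro \<delta>[of "max s t"]) auto
    then show "dist (F (\<lambda>k. solution k s) i) (F (\<lambda>k. solution k t) i) < e"
      using \<open>0 < e\<close> by (simp add: dist_real_def)
  qed
qed

lemma node_uniform_limit:
  assumes "i \<in> I"
  shows "uniform_limit {0..<T} (\<lambda>m t. F (node m t) i) (\<lambda>t. F (\<lambda>k. solution k t) i) sequentially"
  unfolding uniform_limit_iff
proof (intro allI impI)
  fix e :: real assume "0 < e"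
  then obtain \<delta> where "0 < \<delta>" and \<delta>: "\<And>x y t i. t \<in> {0..T} \<Longrightarrow> i \<in> I \<Longrightarrow>
       (\<And>k. k \<in> I \<Longrightarrow> \<bar>x k - q0 k\<bar> \<le> V * t) \<Longrightarrow> (\<And>k. k \<in> I \<Longrightarrow> \<bar>y k - q0 k\<bar> \<le> V * t) \<Longrightarrow>
       (\<And>k. k \<in> I \<Longrightarrow> \<bar>x k - y k\<bar> \<le> \<delta>) \<Longrightarrow> \<bar>F x i - F y i\<bar> \<le> e / 2"
    using F_close_on_drift_box[of "e / 2"] by (metis half_gt_zero)
  have "\<forall>\<^sub>F m in sequentially. \<forall>x\<in>{0..T} \<times> I. dist ((\<lambda>(t, i). polygon m t i) x) ((\<lambda>(t, i). solution i t) x) < \<delta> / 2"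
    using uniform_limitD[OF polygon_uniform_limit, of "\<delta> / 2"] \<open>0 < \<delta>\<close> by simp
  moreover have "\<forall>\<^sub>F m in sequentially. V * step m < \<delta> / 2"
    using \<open>0 < \<delta>\<close> by (intro eventually_step_small) simp
  ultimately show "\<forall>\<^sub>F m in sequentially. \<forall>t\<in>{0..<T}. dist (F (node m t) i) (F (\<lambda>k. solution k t) i) < e"
  proof eventually_elim
    case (elim m)
    show ?case
    proof
      fix t assume t: "t \<in> {0..<T}"
      have "\<bar>node m t k - q0 k\<bar> \<le> V * t" for k
        using node_drift t by simp
      moreover have "\<bar>node m t k - solution k t\<bar> \<le> \<delta>" if "k \<in> I" for k
      proof -
        have "\<bar>polygon m t k - solution k t\<bar> < \<delta> / 2"
          using elim(1) t that by (auto simp: dist_real_def)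
        moreover have "\<bar>polygon m t k - node m t k\<bar> < \<delta> / 2"
          using polygon_near_node[of t m k] elim(2) t by simp
        ultimately show ?thesis by linarith
      qed
      ultimately have "\<bar>F (node m t) i - F (\<lambda>k. solution k t) i\<bar> \<le> e / 2"
        using t assms solution_drift by (intro \<delta>[of t]) auto
      then show "dist (F (node m t) i) (F (\<lambda>k. solution k t) i) < e"
        using \<open>0 < e\<close> by (simp add: dist_real_def)
    qed
  qed
qed

lemma solution_has_derivative:
  assumes "i \<in> I" "t \<in> {0..T}"
  shows "(solution i has_real_derivative F (\<lambda>k. solution k t) i) (at t within {0..T})"
proof (rule has_real_derivative_limit[where P = "\<lambda>m t. polygon m t i" and p = "\<lambda>m t. F (node m t) i"])
  show "continuous_on {0..T} (\<lambda>t. polygon m t i)" for m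
    by (rule polygon_continuous)
  show "((\<lambda>t. polygon m t i) has_real_derivative F (node m \<tau>) i) (at \<tau> within {\<tau>..T})"
    if "\<tau> \<in> {0..<T}" for m \<tau>
    using polygon_right_deriv[OF that] .
  show "(\<lambda>m. polygon m \<tau> i) \<longlonglongrightarrow> solution i \<tau>" if "\<tau> \<in> {0..T}" for \<tau>
    using polygon_tendsto[OF that assms(1)] .
qed (use assms node_uniform_limit F_solution_continuous in auto)

lemma exists_solution:
  "\<exists>Q. \<forall>i\<in>I. Q i 0 = q0 i \<and>
     (\<forall>t\<in>{0..T}. (Q i has_real_derivative F (\<lambda>k. Q k t) i) (at t within {0..T}))"
  using solution_0 solution_has_derivative by blast

end

section \<open>The particle system\<close>

lemma Psi_eq_powr: "Psi \<alpha> r = ((max r 0) powr (1 - \<alpha>) - (max (- r) 0) powr (1 - \<alpha>)) / (1 - \<alpha>)"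
  unfolding Psi_def by (cases "r > 0"; cases "r = 0") (auto simp: max_def sgn_if)

lemma Psi_0 [simp]: "Psi \<alpha> 0 = 0"
  unfolding Psi_def by simp

lemma Psi_minus: "Psi \<alpha> (- r) = - Psi \<alpha> r"
  unfolding Psi_def by simp

lemma continuous_on_Psi: "\<alpha> < 1 \<Longrightarrow> continuous_on S (Psi \<alpha>)"
  unfolding Psi_eq_powr[abs_def] by (intro continuous_intros continuous_on_powr') auto

lemma Psi_mono: "\<alpha> < 1 \<Longrightarrow> x \<le> y \<Longrightarrow> Psi \<alpha> x \<le> Psi \<alpha> y"
  unfolding Psi_eq_powr by (intro divide_right_mono diff_mono powr_mono2) auto

lemma abs_Psi_le: "\<alpha> < 1 \<Longrightarrow> \<bar>r\<bar> \<le> R \<Longrightarrow> \<bar>Psi \<alpha> r\<bar> \<le> Psi \<alpha> R"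
  using Psi_mono[of \<alpha> r R] Psi_mono[of \<alpha> "- R" r] Psi_minus[of \<alpha> R] by (auto simp: abs_le_iff)

lemma strict_mono_on_if_deriv_pos:
  fixes g g' :: "real \<Rightarrow> real"
  assumes der: "\<And>x. 0 \<le> x \<Longrightarrow> (g has_real_derivative g' x) (at x within {0..})"
    and pos: "\<And>x. 0 \<le> x \<Longrightarrow> 0 < g' x"
  shows "strict_mono_on {0..} g"
proof (rule strict_mono_onI)
  fix a b :: real assume "a \<in> {0..}" "b \<in> {0..}" "a < b"
  show "g a < g b"
  proof (rule DERIV_pos_imp_increasing_open[OF \<open>a < b\<close>])
    fix x assume x: "a < x" "x < b"
    have "(g has_real_derivative g' x) (at x within {0<..})"
      by (rule has_field_derivative_subset[OF der]) (use x \<open>a \<in> {0..}\<close> in auto)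
    moreover have "at x within {0<..} = at x"
      using x \<open>a \<in> {0..}\<close> by (intro at_within_open) auto
    ultimately have "(g has_real_derivative g' x) (at x)"
      by simp
    then show "\<exists>y. (g has_real_derivative y) (at x) \<and> 0 < y"
      using pos[of x] x \<open>a \<in> {0..}\<close> by auto
  next
    have "continuous_on {0..} g"
      by (rule DERIV_continuous_on[where D = g']) (use der in auto)
    then show "continuous_on {a..b} g"
      by (rule continuous_on_subset) (use \<open>a \<in> {0..}\<close> in auto)
  qed
qed

lemma vel_eq_derivative:
  assumes "(f has_real_derivative y) (at t within {0..})" and "0 \<le> t"
  shows "vel f t = y"
proof -
  have "t islimpt {0..}"
    using islimpt_subset[of t "{t..t + 1}" "{0..}"] \<open>0 \<le> t\<close> by auto
  then have "at t within {0..} \<noteq> bot"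
    by (simp add: trivial_limit_within)
  moreover have "(f has_vector_derivative y) (at t within {0..})"
    using assms(1) by (simp add: has_real_derivative_iff_has_vector_derivative)
  ultimately show ?thesis
    unfolding vel_def by (rule vector_derivative_within)
qed

locale particle_system =
  fixes N :: nat and \<kappa> \<alpha> :: real and g :: "real \<Rightarrow> real" and \<nu> :: "nat \<Rightarrow> real"
  assumes kappa_nonneg: "0 \<le> \<kappa>" and alpha_lt_1: "\<alpha> < 1"
    and g_continuous: "continuous_on {0..} g" and g_strict_mono: "strict_mono_on {0..} g"
    and g_0: "g 0 = 0"
begin

lemma Gf_eq: "Gf g p = g (max p 0) - g (max (- p) 0)"
  unfolding Gf_def using g_0 by (cases "p > 0"; cases "p = 0") (auto simp: max_def)

lemma Gf_nonneg_eq: "0 \<le> p \<Longrightarrow> Gf g p = g p"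
  unfolding Gf_eq using g_0 by (simp add: max_def)

lemma Gf_minus: "Gf g (- p) = - Gf g p"
  unfolding Gf_eq by simp

lemma continuous_on_Gf: "continuous_on S (Gf g)"
  unfolding Gf_eq[abs_def]
  by (intro continuous_intros continuous_on_compose2[OF g_continuous]) auto

lemma Gf_strict_mono: "p < q \<Longrightarrow> Gf g p < Gf g q"
proof -
  assume "p < q"
  have mono: "g a \<le> g b" if "0 \<le> a" "a \<le> b" for a b
    using that strict_mono_onD[OF g_strict_mono, of a b] by (cases "a = b") auto
  have "g (max p 0) \<le> g (max q 0)" "g (max (- q) 0) \<le> g (max (- p) 0)"
    using \<open>p < q\<close> by (intro mono; simp)+
  moreover have "g (max p 0) < g (max q 0) \<or> g (max (- q) 0) < g (max (- p) 0)"
    using \<open>p < q\<close> by (cases "0 < q") (auto intro!: strict_mono_onD[OF g_strict_mono])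
  ultimately show ?thesis
    unfolding Gf_eq by linarith
qed

lemma Gf_mono: "p \<le> q \<Longrightarrow> Gf g p \<le> Gf g q"
  using Gf_strict_mono by (cases "p = q") (auto intro: less_imp_le)

lemma Gf_eq_iff: "Gf g p = Gf g q \<longleftrightarrow> p = q"
  using Gf_strict_mono by (metis less_irrefl linorder_neqE)

lemma g_nonneg: "0 \<le> x \<Longrightarrow> 0 \<le> g x"
  using Gf_mono[of 0 x] by (simp add: Gf_nonneg_eq g_0)

definition drive :: "(nat \<Rightarrow> real) \<Rightarrow> nat \<Rightarrow> real" where
  "drive x i = \<nu> i + \<kappa> / real N * (\<Sum>k=1..N. Psi \<alpha> (x k - x i))"

definition velocity :: "(nat \<Rightarrow> real) \<Rightarrow> nat \<Rightarrow> real" where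
  "velocity x i = Gf g (drive x i)"

lemma rhs_eq_velocity: "rhs g \<kappa> \<alpha> N \<nu> Q i t = velocity (\<lambda>k. Q k t) i"
  unfolding rhs_def velocity_def drive_def ..

lemma drive_cong: "(\<And>k. k \<in> {1..N} \<Longrightarrow> x k = y k) \<Longrightarrow> i \<in> {1..N} \<Longrightarrow> drive x i = drive y i"
  unfolding drive_def
  by (intro arg_cong2[where f = "(+)"] arg_cong2[where f = "(*)"] refl sum.cong) auto

lemma velocity_cong:
  assumes "\<And>k. k \<in> {1..N} \<Longrightarrow> x k = y k" "i \<in> {1..N}"
  shows "velocity x i = velocity y i"
  unfolding velocity_def using drive_cong[OF assms] by simp

lemma drive_mono:
  assumes "\<And>k. k \<in> {1..N} \<Longrightarrow> x k - x i \<le> y k - y i"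
  shows "drive x i \<le> drive y i"
  unfolding drive_def using assms kappa_nonneg alpha_lt_1
  by (intro add_left_mono mult_left_mono sum_mono Psi_mono) auto

lemma drive_le_at_rightmost: "(\<And>k. k \<in> {1..N} \<Longrightarrow> x k \<le> x p) \<Longrightarrow> drive x p \<le> \<nu> p"
  using drive_mono[of x p "\<lambda>_. 0"] by (simp add: drive_def)

lemma drive_ge_at_leftmost: "(\<And>k. k \<in> {1..N} \<Longrightarrow> x p \<le> x k) \<Longrightarrow> \<nu> p \<le> drive x p"
  using drive_mono[of "\<lambda>_. 0" p x] by (simp add: drive_def)

lemma drive_same_position: "x i = x j \<Longrightarrow> drive x i - drive x j = \<nu> i - \<nu> j"
  unfolding drive_def by simp

lemma abs_drive_le:
  assumes "\<And>k. k \<in> {1..N} \<Longrightarrow> \<bar>x k - x i\<bar> \<le> R" and "i \<in> {1..N}"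
  shows "\<bar>drive x i\<bar> \<le> \<bar>\<nu> i\<bar> + \<kappa> * Psi \<alpha> R"
proof -
  have "N \<noteq> 0" using \<open>i \<in> {1..N}\<close> by auto
  have "\<bar>\<Sum>k=1..N. Psi \<alpha> (x k - x i)\<bar> \<le> (\<Sum>k=1..N. Psi \<alpha> R)"
    using assms alpha_lt_1 by (intro order_trans[OF sum_abs] sum_mono abs_Psi_le) auto
  then have "\<kappa> / real N * \<bar>\<Sum>k=1..N. Psi \<alpha> (x k - x i)\<bar> \<le> \<kappa> * Psi \<alpha> R"
    using kappa_nonneg mult_left_mono[of _ "real N * Psi \<alpha> R" "\<kappa> / real N"] \<open>N \<noteq> 0\<close> by simp
  moreover have "\<bar>drive x i\<bar> \<le> \<bar>\<nu> i\<bar> + \<bar>\<kappa> / real N * (\<Sum>k=1..N. Psi \<alpha> (x k - x i))\<bar>"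
    unfolding drive_def by (rule abs_triangle_ineq)
  ultimately show ?thesis
    using kappa_nonneg by (simp add: abs_mult)
qed

lemma drive_uniformly_continuous:
  assumes "0 < \<epsilon>"
  shows "\<exists>\<delta>>0. \<forall>x y. (\<forall>k\<in>{1..N}. \<bar>x k\<bar> \<le> C \<and> \<bar>y k\<bar> \<le> C \<and> \<bar>x k - y k\<bar> \<le> \<delta>)
    \<longrightarrow> (\<forall>i\<in>{1..N}. \<bar>drive x i - drive y i\<bar> \<le> \<epsilon>)"
proof -
  define \<epsilon>' where "\<epsilon>' = \<epsilon> / (\<kappa> + 1)"
  have "0 < \<epsilon>'" "\<kappa> * \<epsilon>' \<le> \<epsilon>"
    using assms kappa_nonneg by (auto simp: \<epsilon>'_def field_simps)
  have "uniformly_continuous_on {- (2 * C)..2 * C} (Psi \<alpha>)"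
    using alpha_lt_1 by (intro compact_uniformly_continuous continuous_on_Psi) auto
  then obtain d where "0 < d" and d: "\<And>a b. a \<in> {- (2 * C)..2 * C} \<Longrightarrow> b \<in> {- (2 * C)..2 * C} \<Longrightarrow>
      dist b a < d \<Longrightarrow> dist (Psi \<alpha> b) (Psi \<alpha> a) < \<epsilon>'"
    unfolding uniformly_continuous_on_def using \<open>0 < \<epsilon>'\<close> by metis
  show ?thesis
  proof (intro exI[of _ "d / 3"] conjI allI impI ballI)
    show "0 < d / 3" using \<open>0 < d\<close> by simp
    fix x y i
    assume box: "\<forall>k\<in>{1..N}. \<bar>x k\<bar> \<le> C \<and> \<bar>y k\<bar> \<le> C \<and> \<bar>x k - y k\<bar> \<le> d / 3" and i: "i \<in> {1..N}"
    have "\<bar>Psi \<alpha> (x k - x i) - Psi \<alpha> (y k - y i)\<bar> \<le> \<epsilon>'" if k: "k \<in> {1..N}" for k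
    proof -
      have "\<bar>x k\<bar> \<le> C" "\<bar>y k\<bar> \<le> C" "\<bar>x k - y k\<bar> \<le> d / 3"
        "\<bar>x i\<bar> \<le> C" "\<bar>y i\<bar> \<le> C" "\<bar>x i - y i\<bar> \<le> d / 3"
        using box k i by auto
      then have "x k - x i \<in> {- (2 * C)..2 * C}" "y k - y i \<in> {- (2 * C)..2 * C}"
        "dist (y k - y i) (x k - x i) < d"
        using \<open>0 < d\<close> unfolding dist_real_def atLeastAtMost_iff abs_le_iff abs_less_iff
        by linarith+
      from d[OF this] show ?thesis by (simp add: dist_real_def abs_minus_commute)
    qed
    then have "\<bar>(\<Sum>k=1..N. Psi \<alpha> (x k - x i)) - (\<Sum>k=1..N. Psi \<alpha> (y k - y i))\<bar> \<le> real N * \<epsilon>'"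
      unfolding sum_subtractf[symmetric]
      using order_trans[OF sum_abs sum_mono[of "{1..N}" _ "\<lambda>_. \<epsilon>'"]] by simp
    then have "\<kappa> / real N * \<bar>(\<Sum>k=1..N. Psi \<alpha> (x k - x i)) - (\<Sum>k=1..N. Psi \<alpha> (y k - y i))\<bar> \<le> \<kappa> * \<epsilon>'"
      using kappa_nonneg \<open>0 < \<epsilon>'\<close> mult_left_mono[of _ "real N * \<epsilon>'" "\<kappa> / real N"]
      by (cases "N = 0") auto
    moreover have "\<bar>drive x i - drive y i\<bar>
        = \<kappa> / real N * \<bar>(\<Sum>k=1..N. Psi \<alpha> (x k - x i)) - (\<Sum>k=1..N. Psi \<alpha> (y k - y i))\<bar>"
    proof -
      have "drive x i - drive y i
          = \<kappa> / real N * ((\<Sum>k=1..N. Psi \<alpha> (x k - x i)) - (\<Sum>k=1..N. Psi \<alpha> (y k - y i)))"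
        unfolding drive_def by (simp add: right_diff_distrib)
      then show ?thesis
        using kappa_nonneg by (simp add: abs_mult)
    qed
    ultimately show "\<bar>drive x i - drive y i\<bar> \<le> \<epsilon>"
      using \<open>\<kappa> * \<epsilon>' \<le> \<epsilon>\<close> by linarith
  qed
qed

lemma velocity_dissipative: "max_dissipative {1..N} velocity"
  unfolding max_dissipative_def velocity_def
proof (intro allI impI Gf_mono drive_mono)
  fix x y :: "nat \<Rightarrow> real" and p k
  assume "\<forall>k\<in>{1..N}. x k - y k \<le> x p - y p" "k \<in> {1..N}"
  from bspec[OF this] show "x k - x p \<le> y k - y p" by linarith
qed

lemma velocity_same_position:
  assumes "x i = x j"
  shows "velocity x i = velocity x j \<longleftrightarrow> \<nu> i = \<nu> j" and "\<nu> j < \<nu> i \<Longrightarrow> velocity x j < velocity x i"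
  using drive_same_position[OF assms] unfolding velocity_def
  by (auto simp: Gf_eq_iff intro: Gf_strict_mono)

lemma velocity_ahead_le: "\<nu> i = \<nu> j \<Longrightarrow> x j \<le> x i \<Longrightarrow> velocity x i \<le> velocity x j"
  unfolding velocity_def drive_def using kappa_nonneg alpha_lt_1
  by (intro Gf_mono add_mono mult_left_mono sum_mono Psi_mono) auto

definition clamped_velocity :: "real \<Rightarrow> (nat \<Rightarrow> real) \<Rightarrow> nat \<Rightarrow> real" where
  "clamped_velocity B x i = Gf g (max (- B) (min B (drive x i)))"

lemma clamped_velocity_bounded: "0 \<le> B \<Longrightarrow> \<bar>clamped_velocity B x i\<bar> \<le> g B"
  unfolding clamped_velocity_def
  using Gf_mono[of "- B" "max (- B) (min B (drive x i))"] Gf_mono[of "max (- B) (min B (drive x i))" B]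
  by (auto simp: Gf_minus Gf_nonneg_eq abs_le_iff)

lemma clamped_velocity_eq_velocity: "\<bar>drive x i\<bar> \<le> B \<Longrightarrow> clamped_velocity B x i = velocity x i"
  unfolding clamped_velocity_def velocity_def by (simp add: abs_le_iff)

lemma clamped_velocity_dissipative: "max_dissipative {1..N} (clamped_velocity B)"
  unfolding max_dissipative_def clamped_velocity_def
proof (intro allI impI Gf_mono max.mono min.mono order.refl drive_mono)
  fix x y :: "nat \<Rightarrow> real" and p k
  assume "\<forall>k\<in>{1..N}. x k - y k \<le> x p - y p" "k \<in> {1..N}"
  from bspec[OF this] show "x k - x p \<le> y k - y p" by linarith
qed

lemma clamped_velocity_le_at_rightmost:
  assumes "\<And>k. k \<in> {1..N} \<Longrightarrow> x k \<le> x p" and "\<bar>\<nu> p\<bar> \<le> A" and "0 \<le> B"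
  shows "clamped_velocity B x p \<le> g A"
proof -
  have "max (- B) (min B (drive x p)) \<le> A"
    using drive_le_at_rightmost[of x p, OF assms(1)] assms(2,3) by auto
  from Gf_mono[OF this] show ?thesis
    unfolding clamped_velocity_def using assms(2) by (simp add: Gf_nonneg_eq)
qed

lemma clamped_velocity_ge_at_leftmost:
  assumes "\<And>k. k \<in> {1..N} \<Longrightarrow> x p \<le> x k" and "\<bar>\<nu> p\<bar> \<le> A" and "0 \<le> B"
  shows "- g A \<le> clamped_velocity B x p"
proof -
  have "- A \<le> max (- B) (min B (drive x p))"
    using drive_ge_at_leftmost[of x p, OF assms(1)] assms(2,3) by auto
  from Gf_mono[OF this] show ?thesis
    unfolding clamped_velocity_def using assms(2) by (simp add: Gf_minus Gf_nonneg_eq)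
qed

lemma clamped_velocity_uniformly_continuous:
  assumes "0 < \<epsilon>" and "0 \<le> B"
  shows "\<exists>\<delta>>0. \<forall>x y. (\<forall>k\<in>{1..N}. \<bar>x k\<bar> \<le> C \<and> \<bar>y k\<bar> \<le> C \<and> \<bar>x k - y k\<bar> \<le> \<delta>)
    \<longrightarrow> (\<forall>i\<in>{1..N}. \<bar>clamped_velocity B x i - clamped_velocity B y i\<bar> \<le> \<epsilon>)"
proof -
  have "uniformly_continuous_on {- B..B} (Gf g)"
    by (intro compact_uniformly_continuous continuous_on_Gf) auto
  then obtain d where "0 < d" and d: "\<And>a b. a \<in> {- B..B} \<Longrightarrow> b \<in> {- B..B} \<Longrightarrow>
      dist b a < d \<Longrightarrow> dist (Gf g b) (Gf g a) < \<epsilon>"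
    unfolding uniformly_continuous_on_def using assms(1) by metis
  have "0 < d / 2" using \<open>0 < d\<close> by simp
  from drive_uniformly_continuous[OF this, of C]
  obtain \<delta> where "0 < \<delta>" and \<delta>: "\<forall>x y. (\<forall>k\<in>{1..N}. \<bar>x k\<bar> \<le> C \<and> \<bar>y k\<bar> \<le> C \<and> \<bar>x k - y k\<bar> \<le> \<delta>)
      \<longrightarrow> (\<forall>i\<in>{1..N}. \<bar>drive x i - drive y i\<bar> \<le> d / 2)"
    by blast
  have clamp_lipschitz: "\<bar>max (- B) (min B a) - max (- B) (min B b)\<bar> \<le> \<bar>a - b\<bar>" for a b :: real
    by (auto simp: abs_le_iff max_def min_def)
  show ?thesis
  proof (intro exI[of _ \<delta>] conjI allI impI ballI)
    fix x y i assume "\<forall>k\<in>{1..N}. \<bar>x k\<bar> \<le> C \<and> \<bar>y k\<bar> \<le> C \<and> \<bar>x k - y k\<bar> \<le> \<delta>" "i \<in> {1..N}"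
    then have "\<bar>drive x i - drive y i\<bar> \<le> d / 2"
      using \<delta> by blast
    then have "dist (max (- B) (min B (drive x i))) (max (- B) (min B (drive y i))) < d"
      using clamp_lipschitz[of "drive x i" "drive y i"] \<open>0 < d\<close> by (simp add: dist_real_def)
    from d[OF _ _ this] show "\<bar>clamped_velocity B x i - clamped_velocity B y i\<bar> \<le> \<epsilon>"
      unfolding clamped_velocity_def using \<open>0 \<le> B\<close> by (simp add: dist_real_def)
  qed (rule \<open>0 < \<delta>\<close>)
qed

lemma clamped_solution_bounded:
  assumes "0 \<le> B" and \<nu>_le: "\<And>i. i \<in> {1..N} \<Longrightarrow> \<bar>\<nu> i\<bar> \<le> A"
    and init: "\<And>i. i \<in> {1..N} \<Longrightarrow> \<bar>Q i 0\<bar> \<le> C0"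
    and Q: "\<And>i t. i \<in> {1..N} \<Longrightarrow> t \<in> {0..T} \<Longrightarrow>
      (Q i has_real_derivative clamped_velocity B (\<lambda>k. Q k t) i) (at t within {0..T})"
    and i: "i \<in> {1..N}" and t: "t \<in> {0..T}"
  shows "\<bar>Q i t\<bar> \<le> C0 + g A * t"
proof -
  have der: "(Q i has_real_derivative clamped_velocity B (\<lambda>k. Q k t) i) (at t within {t..T})"
    if "i \<in> {1..N}" "t \<in> {0..<T}" for i t
    by (rule has_field_derivative_subset[OF Q[OF that(1)]]) (use that in auto)
  have cont: "continuous_on {0..T} (Q i)" if "i \<in> {1..N}" for i
    by (rule DERIV_continuous_on[OF Q[OF that]])
  have "Q i t \<le> C0 + g A * (t - 0)"
  proof (rule family_growth_le[where d = "\<lambda>i t. clamped_velocity B (\<lambda>k. Q k t) i", OF _ cont der _ _ i t])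
    show "clamped_velocity B (\<lambda>k. Q k t) p \<le> g A"
      if "p \<in> {1..N}" "\<And>k. k \<in> {1..N} \<Longrightarrow> Q k t \<le> Q p t" for p t
      using clamped_velocity_le_at_rightmost[of "\<lambda>k. Q k t" p, OF that(2) \<nu>_le[OF that(1)] \<open>0 \<le> B\<close>] .
  qed (use init in \<open>auto simp: abs_le_iff\<close>)
  moreover have "- Q i t \<le> C0 + g A * (t - 0)"
  proof (rule family_growth_le[where D = "\<lambda>i t. - Q i t" and d = "\<lambda>i t. - clamped_velocity B (\<lambda>k. Q k t) i",
        OF _ _ _ _ _ i t])
    show "continuous_on {0..T} (\<lambda>t. - Q i t)" if "i \<in> {1..N}" for i
      using cont[OF that] by (intro continuous_intros)
    show "((\<lambda>t. - Q i t) has_real_derivative - clamped_velocity B (\<lambda>k. Q k t) i) (at t within {t..T})"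
      if "i \<in> {1..N}" "t \<in> {0..<T}" for i t
      using der[OF that] by (intro derivative_intros)
    show "- clamped_velocity B (\<lambda>k. Q k t) p \<le> g A"
      if "p \<in> {1..N}" "\<And>k. k \<in> {1..N} \<Longrightarrow> - Q k t \<le> - Q p t" for p t
      using clamped_velocity_ge_at_leftmost[of "\<lambda>k. Q k t" p, OF _ \<nu>_le[OF that(1)] \<open>0 \<le> B\<close>] that(2)
      by force
  qed (use init in \<open>auto simp: abs_le_iff\<close>)
  ultimately show ?thesis by simp
qed

lemma clamped_dissipative_ivp:
  assumes "0 \<le> B" "0 < T"
  shows "dissipative_ivp {1..N} (clamped_velocity B) q0 T (g B)"
proof
  define C0 where "C0 = (\<Sum>k=1..N. \<bar>q0 k\<bar>)"
  have q0_le: "\<bar>q0 k\<bar> \<le> C0" if "k \<in> {1..N}" for k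
    unfolding C0_def using that by (auto intro: member_le_sum)
  show "\<bar>clamped_velocity B x i\<bar> \<le> g B" for x i
    using clamped_velocity_bounded[OF \<open>0 \<le> B\<close>] .
  fix \<epsilon> :: real assume "0 < \<epsilon>"
  then obtain \<delta> where "0 < \<delta>" and \<delta>: "\<forall>x y. (\<forall>k\<in>{1..N}. \<bar>x k\<bar> \<le> C0 + g B * T \<and> \<bar>y k\<bar> \<le> C0 + g B * T
      \<and> \<bar>x k - y k\<bar> \<le> \<delta>) \<longrightarrow> (\<forall>i\<in>{1..N}. \<bar>clamped_velocity B x i - clamped_velocity B y i\<bar> \<le> \<epsilon>)"
    using clamped_velocity_uniformly_continuous[OF _ \<open>0 \<le> B\<close>] by blast
  show "\<exists>\<delta>>0. \<forall>x y. (\<forall>k\<in>{1..N}. \<bar>x k - q0 k\<bar> \<le> g B * T \<and> \<bar>y k - q0 k\<bar> \<le> g B * T \<and> \<bar>x k - y k\<bar> \<le> \<delta>)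
      \<longrightarrow> (\<forall>i\<in>{1..N}. \<bar>clamped_velocity B x i - clamped_velocity B y i\<bar> \<le> \<epsilon>)"
  proof (intro exI[of _ \<delta>] conjI allI impI)
    fix x y assume "\<forall>k\<in>{1..N}. \<bar>x k - q0 k\<bar> \<le> g B * T \<and> \<bar>y k - q0 k\<bar> \<le> g B * T \<and> \<bar>x k - y k\<bar> \<le> \<delta>"
    then have "\<forall>k\<in>{1..N}. \<bar>x k\<bar> \<le> C0 + g B * T \<and> \<bar>y k\<bar> \<le> C0 + g B * T \<and> \<bar>x k - y k\<bar> \<le> \<delta>"
      using q0_le by force
    with \<delta> show "\<forall>i\<in>{1..N}. \<bar>clamped_velocity B x i - clamped_velocity B y i\<bar> \<le> \<epsilon>"
      by blast
  qed (rule \<open>0 < \<delta>\<close>)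
qed (use assms clamped_velocity_dissipative in auto)

definition solution_on :: "real \<Rightarrow> (nat \<Rightarrow> real) \<Rightarrow> (nat \<Rightarrow> real \<Rightarrow> real) \<Rightarrow> bool" where
  "solution_on T q0 Q \<longleftrightarrow> (\<forall>i\<in>{1..N}. Q i 0 = q0 i \<and>
     (\<forall>t\<in>{0..T}. (Q i has_real_derivative velocity (\<lambda>k. Q k t) i) (at t within {0..T})))"

lemma solution_on_exists:
  assumes "0 < T"
  shows "\<exists>Q. solution_on T q0 Q"
proof -
  define A where "A = (\<Sum>k=1..N. \<bar>\<nu> k\<bar>)"
  define C0 where "C0 = (\<Sum>k=1..N. \<bar>q0 k\<bar>)"
  define R where "R = 2 * (C0 + g A * T)"
  define B where "B = A + \<kappa> * Psi \<alpha> R"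
  have \<nu>_le: "\<bar>\<nu> i\<bar> \<le> A" and q0_le: "\<bar>q0 i\<bar> \<le> C0" if "i \<in> {1..N}" for i
    unfolding A_def C0_def using that by (auto intro: member_le_sum)
  have "0 \<le> A" "0 \<le> C0"
    unfolding A_def C0_def by (auto intro: sum_nonneg)
  then have "0 \<le> R" "0 \<le> g A"
    unfolding R_def using \<open>0 < T\<close> g_nonneg by auto
  then have "0 \<le> B"
    unfolding B_def using kappa_nonneg Psi_mono[OF alpha_lt_1, of 0 R] \<open>0 \<le> A\<close> by auto
  obtain Q where Q0: "\<And>i. i \<in> {1..N} \<Longrightarrow> Q i 0 = q0 i"
    and Q: "\<And>i t. i \<in> {1..N} \<Longrightarrow> t \<in> {0..T} \<Longrightarrow>
      (Q i has_real_derivative clamped_velocity B (\<lambda>k. Q k t) i) (at t within {0..T})"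
    using dissipative_ivp.exists_solution[OF clamped_dissipative_ivp[OF \<open>0 \<le> B\<close> \<open>0 < T\<close>]] by blast
  have "clamped_velocity B (\<lambda>k. Q k t) i = velocity (\<lambda>k. Q k t) i"
    if i: "i \<in> {1..N}" and t: "t \<in> {0..T}" for i t
  proof (rule clamped_velocity_eq_velocity)
    have "g A * t \<le> g A * T"
      using t \<open>0 \<le> g A\<close> by (simp add: mult_left_mono)
    then have "\<bar>Q k t - Q i t\<bar> \<le> R" if "k \<in> {1..N}" for k
      using clamped_solution_bounded[OF \<open>0 \<le> B\<close> \<nu>_le _ Q, of C0] that i t q0_le Q0
      unfolding R_def by (smt (verit) atLeastAtMost_iff)
    from abs_drive_le[of "\<lambda>k. Q k t" i R, OF this i] show "\<bar>drive (\<lambda>k. Q k t) i\<bar> \<le> B"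
      unfolding B_def using \<nu>_le[OF i] by simp
  qed
  then show ?thesis
    unfolding solution_on_def using Q0 Q by (intro exI[of _ Q]) auto
qed

lemma solution_on_mono:
  assumes "solution_on T q0 Q" "T' \<le> T"
  shows "solution_on T' q0 Q"
  unfolding solution_on_def
proof (intro ballI conjI)
  fix i t assume "i \<in> {1..N}" "t \<in> {0..T'}"
  then have "(Q i has_real_derivative velocity (\<lambda>k. Q k t) i) (at t within {0..T})"
    using assms unfolding solution_on_def by auto
  then show "(Q i has_real_derivative velocity (\<lambda>k. Q k t) i) (at t within {0..T'})"
    by (rule has_field_derivative_subset) (use assms(2) in auto)
qed (use assms in \<open>auto simp: solution_on_def\<close>)

lemma solution_on_unique:
  assumes "solution_on T q0 Q" "solution_on T' q0 Q'" "i \<in> {1..N}" "0 \<le> t" "t \<le> T" "t \<le> T'"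
  shows "Q i t = Q' i t"
proof -
  have "solution_on t q0 Q" "solution_on t q0 Q'"
    using solution_on_mono assms by blast+
  then have Q: "\<And>j s. j \<in> {1..N} \<Longrightarrow> s \<in> {0..t} \<Longrightarrow>
        (Q j has_real_derivative velocity (\<lambda>k. Q k s) j) (at s within {0..t})"
    and Q': "\<And>j s. j \<in> {1..N} \<Longrightarrow> s \<in> {0..t} \<Longrightarrow>
        (Q' j has_real_derivative velocity (\<lambda>k. Q' k s) j) (at s within {0..t})"
    and init: "\<And>j. j \<in> {1..N} \<Longrightarrow> Q j 0 = Q' j 0"
    unfolding solution_on_def by simp_all
  show ?thesis
    using dissipative_solutions_unique[OF _ velocity_dissipative Q Q' init \<open>i \<in> {1..N}\<close>] \<open>0 \<le> t\<close>
    by simp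
qed

definition flow :: "(nat \<Rightarrow> real) \<Rightarrow> nat \<Rightarrow> real \<Rightarrow> real" where
  "flow q0 i t = (SOME Q. solution_on (t + 1) q0 Q) i t"

lemma flow_eq_solution_on:
  assumes "solution_on T q0 Q" "i \<in> {1..N}" "0 \<le> t" "t \<le> T"
  shows "flow q0 i t = Q i t"
proof -
  have "\<exists>Q. solution_on (t + 1) q0 Q"
    using solution_on_exists \<open>0 \<le> t\<close> by simp
  then have "solution_on (t + 1) q0 (SOME Q. solution_on (t + 1) q0 Q)"
    by (rule someI_ex)
  then show ?thesis
    unfolding flow_def using solution_on_unique[OF _ assms(1,2,3) _ assms(4)] by simp
qed

lemma continuous_on_velocity:
  assumes "\<And>k. k \<in> {1..N} \<Longrightarrow> continuous_on S (X k)" and "i \<in> {1..N}"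
  shows "continuous_on S (\<lambda>t. velocity (\<lambda>k. X k t) i)"
proof -
  have "continuous_on S (\<lambda>t. Psi \<alpha> (X k t - X i t))" if "k \<in> {1..N}" for k
    using assms that alpha_lt_1
    by (intro continuous_on_compose2[OF continuous_on_Psi[of \<alpha> UNIV]] continuous_intros) auto
  then show ?thesis
    unfolding velocity_def drive_def
    by (intro continuous_on_compose2[OF continuous_on_Gf[of UNIV]] continuous_intros) auto
qed

lemma flow_has_derivative:
  assumes "i \<in> {1..N}" "0 \<le> t"
  shows "(flow q0 i has_real_derivative velocity (\<lambda>k. flow q0 k t) i) (at t within {0..})"
proof -
  obtain Q where Q: "solution_on (t + 1) q0 Q"
    using solution_on_exists[of "t + 1"] assms by auto
  have eq: "flow q0 k s = Q k s" if "k \<in> {1..N}" "s \<in> {0..t + 1}" for k s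
    using flow_eq_solution_on[OF Q that(1)] that(2) by auto
  have "(Q i has_real_derivative velocity (\<lambda>k. Q k t) i) (at t within {0..t + 1})"
    using Q assms unfolding solution_on_def by auto
  moreover have "at t within {0..t + 1} = at t within {0..}"
    by (rule at_within_nhd[of _ "{..<t + 1}"]) auto
  moreover have "velocity (\<lambda>k. Q k t) i = velocity (\<lambda>k. flow q0 k t) i"
    using eq assms by (intro velocity_cong) auto
  ultimately have "(Q i has_real_derivative velocity (\<lambda>k. flow q0 k t) i) (at t within {0..})"
    by simp
  then show ?thesis
  proof (rule has_field_derivative_transform_within[where d = 1])
    show "Q i s = flow q0 i s" if "s \<in> {0..}" "dist s t < 1" for s
      using eq[OF assms(1)] that by (auto simp: dist_real_def)
  qed (use assms in auto)
qed

lemma flow_0: "i \<in> {1..N} \<Longrightarrow> flow q0 i 0 = q0 i"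
  using solution_on_exists[of 1 q0] flow_eq_solution_on[of 1 q0 _ i 0]
  unfolding solution_on_def by force

lemma continuous_on_flow: "i \<in> {1..N} \<Longrightarrow> continuous_on {0..} (flow q0 i)"
  by (rule DERIV_continuous_on[where D = "\<lambda>t. velocity (\<lambda>k. flow q0 k t) i"]) (simp add: flow_has_derivative)

lemma vel_flow: "i \<in> {1..N} \<Longrightarrow> 0 \<le> t \<Longrightarrow> vel (flow q0 i) t = velocity (\<lambda>k. flow q0 k t) i"
  by (rule vel_eq_derivative[OF flow_has_derivative])

lemma flow_is_classical_solution: "is_classical_solution g \<kappa> \<alpha> N q0 \<nu> (flow q0)"
  unfolding is_classical_solution_def rhs_eq_velocity
proof (intro ballI conjI allI impI)
  fix i assume i: "i \<in> {1..N}"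
  show "flow q0 i 0 = q0 i" using flow_0[OF i] .
  show "(flow q0 i has_real_derivative velocity (\<lambda>k. flow q0 k t) i) (at t within {0..})" if "0 \<le> t" for t
    using flow_has_derivative[OF i that] .
  have "continuous_on {0..} (\<lambda>t. velocity (\<lambda>k. flow q0 k t) i)"
    using continuous_on_flow i by (intro continuous_on_velocity) auto
  then show "continuous_on {0..} (vel (flow q0 i))"
    by (rule continuous_on_eq) (simp add: vel_flow[OF i])
qed

lemma classical_solution_eq_flow:
  assumes "is_classical_solution g \<kappa> \<alpha> N q0 \<nu> Q" "i \<in> {1..N}" "0 \<le> t"
  shows "Q i t = flow q0 i t"
proof -
  have "solution_on t q0 Q"
    unfolding solution_on_def
  proof (intro ballI conjI)
    fix k s assume "k \<in> {1..N}" "s \<in> {0..t}"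
    then have "(Q k has_real_derivative velocity (\<lambda>j. Q j s) k) (at s within {0..})"
      using assms(1) unfolding is_classical_solution_def rhs_eq_velocity by auto
    then show "(Q k has_real_derivative velocity (\<lambda>j. Q j s) k) (at s within {0..t})"
      by (rule has_field_derivative_subset) auto
  qed (use assms(1) in \<open>auto simp: is_classical_solution_def\<close>)
  then show ?thesis
    using flow_eq_solution_on assms(2,3) by (metis order_refl)
qed

end

section \<open>Sticking and collisions\<close>

lemma finite_if_subsingleton:
  assumes "\<And>a b. a \<in> S \<Longrightarrow> b \<in> S \<Longrightarrow> a = b"
  shows "finite S"
proof (cases "S = {}")
  case False
  then obtain a where "a \<in> S" by auto
  with assms have "S \<subseteq> {a}" by auto
  then show ?thesis by (rule finite_subset) simp
qed simp

lemma exists_first_zero: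
  fixes f :: "real \<Rightarrow> real"
  assumes cont: "continuous_on {u..v} f" and "0 < f u" "u \<le> v" "f v = 0"
  obtains z where "u < z" "z \<le> v" "f z = 0" "\<And>\<tau>. u \<le> \<tau> \<Longrightarrow> \<tau> < z \<Longrightarrow> 0 < f \<tau>"
proof -
  define Z where "Z = {\<tau>\<in>{u..v}. f \<tau> = 0}"
  have "closed Z"
  proof -
    have "closed ({u..v} \<inter> f -` {0})"
      using cont by (intro continuous_closed_preimage) auto
    moreover have "Z = {u..v} \<inter> f -` {0}" unfolding Z_def by auto
    ultimately show ?thesis by simp
  qed
  moreover have "v \<in> Z" "bdd_below Z"
    using assms unfolding Z_def by (auto intro: bdd_belowI[of _ u])
  ultimately have "Inf Z \<in> Z"
    using closed_contains_Inf by blast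
  define z where "z = Inf Z"
  have z: "u < z" "z \<le> v" "f z = 0"
    using \<open>Inf Z \<in> Z\<close> \<open>0 < f u\<close> unfolding z_def Z_def by (auto simp: order.order_iff_strict)
  have "0 < f \<tau>" if \<tau>: "u \<le> \<tau>" "\<tau> < z" for \<tau>
  proof (rule ccontr)
    assume "\<not> 0 < f \<tau>"
    moreover have "continuous_on {u..\<tau>} f"
      by (rule continuous_on_subset[OF cont]) (use \<tau> z in auto)
    ultimately obtain x where "u \<le> x" "x \<le> \<tau>" "f x = 0"
      using IVT2'[of f \<tau> 0 u] \<open>0 < f u\<close> \<tau> by auto
    then have "x \<in> Z"
      using \<tau> z unfolding Z_def by auto
    then have "z \<le> x"
      unfolding z_def using \<open>bdd_below Z\<close> by (rule cInf_lower)
    then show False using \<open>x \<le> \<tau>\<close> \<tau> by simp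
  qed
  with z that show ?thesis by blast
qed

text \<open>\<open>f\<close> is positive just after \<open>t1\<close>, whereas \<open>f' z > 0\<close> at the first later zero \<open>z\<close> forces
  \<open>f < 0\<close> just before \<open>z\<close>.\<close>
lemma no_second_zero_if_deriv_pos_at_zeros:
  fixes f f' :: "real \<Rightarrow> real"
  assumes der: "\<And>t. a \<le> t \<Longrightarrow> (f has_real_derivative f' t) (at t within {a..})"
    and pos: "\<And>t. a \<le> t \<Longrightarrow> f t = 0 \<Longrightarrow> 0 < f' t"
    and t1: "a \<le> t1" "f t1 = 0" and t2: "t1 < t2" "f t2 = 0"
  shows False
proof -
  have cont: "continuous_on {a..} f"
    using der by (intro DERIV_continuous_on) auto
  obtain d where "0 < d" and d: "\<And>h. 0 < h \<Longrightarrow> t1 + h \<in> {a..} \<Longrightarrow> h < d \<Longrightarrow> f t1 < f (t1 + h)"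
    using has_real_derivative_pos_inc_right[OF der[OF t1(1)] pos[OF t1]] by blast
  define m where "m = min d (t2 - t1)"
  have m: "0 < m" "m \<le> d" "m \<le> t2 - t1"
    using \<open>0 < d\<close> t2 unfolding m_def by auto
  define u where "u = t1 + m / 2"
  have u: "t1 < u" "u \<le> t2" "0 < f u"
    using m t1 d[of "m / 2"] unfolding u_def by auto
  have "continuous_on {u..t2} f"
    by (rule continuous_on_subset[OF cont]) (use u t1 in auto)
  then obtain z where z: "u < z" "f z = 0" and positive: "\<And>\<tau>. u \<le> \<tau> \<Longrightarrow> \<tau> < z \<Longrightarrow> 0 < f \<tau>"
    using exists_first_zero[of u t2 f] u t2 by blast
  have "a \<le> z"
    using z u t1 by linarith
  obtain d' where "0 < d'" and d': "\<And>h. 0 < h \<Longrightarrow> z - h \<in> {a..} \<Longrightarrow> h < d' \<Longrightarrow> f (z - h) < f z"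
    using has_real_derivative_pos_inc_left[OF der[OF \<open>a \<le> z\<close>] pos[OF \<open>a \<le> z\<close> \<open>f z = 0\<close>]] by blast
  define m' where "m' = min d' (z - u)"
  have m': "0 < m'" "m' \<le> d'" "m' \<le> z - u"
    using \<open>0 < d'\<close> z unfolding m'_def by auto
  define h where "h = m' / 2"
  have "0 < h" "h < d'" "u \<le> z - h" "z - h < z"
    using m' unfolding h_def by auto
  then show False
    using d'[of h] positive[of "z - h"] z u t1 by auto
qed

lemma tendsto_card_if_eventually_same_members:
  assumes "finite A" "\<And>s. S s \<subseteq> A"
    and "\<And>j. j \<in> A \<Longrightarrow> \<forall>\<^sub>F s in F. j \<in> S s \<longleftrightarrow> j \<in> S t"
  shows "((\<lambda>s. real (card (S s))) \<longlongrightarrow> real (card (S t))) F"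
proof (rule tendsto_eventually)
  have "\<forall>\<^sub>F s in F. \<forall>j\<in>A. j \<in> S s \<longleftrightarrow> j \<in> S t"
    using assms(1,3) by (simp add: eventually_ball_finite)
  then show "\<forall>\<^sub>F s in F. real (card (S s)) = real (card (S t))"
  proof (rule eventually_mono)
    fix s assume "\<forall>j\<in>A. j \<in> S s \<longleftrightarrow> j \<in> S t"
    then have "S s = S t"
      using assms(2)[of s] assms(2)[of t] by blast
    then show "real (card (S s)) = real (card (S t))" by simp
  qed
qed

context particle_system begin

lemma stick_iff:
  assumes "i \<in> {1..N}" "0 \<le> t"
  shows "j \<in> Sset N (flow q0) i t \<longleftrightarrow> j \<in> {1..N} \<and> flow q0 i t = flow q0 j t \<and> \<nu> i = \<nu> j"
  unfolding Sset_def stick_def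
  using vel_flow[OF assms(1,2)] vel_flow[of j t] velocity_same_position(1)[of "\<lambda>k. flow q0 k t" i j] assms
  by auto

lemma collide_iff:
  assumes "i \<in> {1..N}" "0 \<le> t"
  shows "j \<in> Cset N (flow q0) i t \<longleftrightarrow> j \<in> {1..N} \<and> flow q0 i t = flow q0 j t \<and> \<nu> i \<noteq> \<nu> j"
  unfolding Cset_def collide_def
  using vel_flow[OF assms(1,2)] vel_flow[of j t] velocity_same_position(1)[of "\<lambda>k. flow q0 k t" i j] assms
  by auto

lemma flow_diff_right_deriv:
  assumes "i \<in> {1..N}" "j \<in> {1..N}" "0 \<le> \<tau>" "\<tau> < t"
  shows "((\<lambda>s. flow q0 i s - flow q0 j s) has_real_derivative
      velocity (\<lambda>k. flow q0 k \<tau>) i - velocity (\<lambda>k. flow q0 k \<tau>) j) (at \<tau> within {\<tau>..t})"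
proof -
  have "((\<lambda>s. flow q0 i s - flow q0 j s) has_real_derivative
      velocity (\<lambda>k. flow q0 k \<tau>) i - velocity (\<lambda>k. flow q0 k \<tau>) j) (at \<tau> within {0..})"
    using flow_has_derivative[OF assms(1,3)] flow_has_derivative[OF assms(2,3)] by (rule derivative_intros)
  then show ?thesis
    by (rule has_field_derivative_subset) (use assms in auto)
qed

lemma sticking_persists:
  assumes "i \<in> {1..N}" "j \<in> {1..N}" "\<nu> i = \<nu> j" "0 \<le> s" "s \<le> t"
    and "flow q0 i s = flow q0 j s"
  shows "flow q0 i t = flow q0 j t"
proof -
  have "\<bar>flow q0 i t - flow q0 j t\<bar> \<le> \<bar>flow q0 i s - flow q0 j s\<bar>"
  proof (rule abs_le_if_right_deriv_toward_zero[OF \<open>s \<le> t\<close>])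
    show "continuous_on {s..t} (\<lambda>\<tau>. flow q0 i \<tau> - flow q0 j \<tau>)"
      using continuous_on_subset[OF continuous_on_flow[OF assms(1)], of "{s..t}"]
        continuous_on_subset[OF continuous_on_flow[OF assms(2)], of "{s..t}"] assms(4)
      by (intro continuous_intros) auto
    fix \<tau> assume \<tau>: "\<tau> \<in> {s..<t}"
    show "((\<lambda>s. flow q0 i s - flow q0 j s) has_real_derivative
        velocity (\<lambda>k. flow q0 k \<tau>) i - velocity (\<lambda>k. flow q0 k \<tau>) j) (at \<tau> within {\<tau>..t})"
      using \<tau> assms by (intro flow_diff_right_deriv) auto
    show "velocity (\<lambda>k. flow q0 k \<tau>) i - velocity (\<lambda>k. flow q0 k \<tau>) j \<le> 0"
      if "0 \<le> flow q0 i \<tau> - flow q0 j \<tau>"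
      using velocity_ahead_le[OF assms(3), of "\<lambda>k. flow q0 k \<tau>"] that by simp
    show "0 \<le> velocity (\<lambda>k. flow q0 k \<tau>) i - velocity (\<lambda>k. flow q0 k \<tau>) j"
      if "flow q0 i \<tau> - flow q0 j \<tau> \<le> 0"
      using velocity_ahead_le[OF assms(3)[symmetric], of "\<lambda>k. flow q0 k \<tau>"] that by simp
  qed
  then show ?thesis
    using assms(6) by simp
qed

lemma meeting_time_unique:
  assumes "i \<in> {1..N}" "j \<in> {1..N}" "\<nu> i \<noteq> \<nu> j"
    and "0 \<le> a" "flow q0 i a = flow q0 j a" "0 \<le> b" "flow q0 i b = flow q0 j b"
  shows "a = b"
proof -
  have no_second_meeting: False
    if "i \<in> {1..N}" "j \<in> {1..N}" "\<nu> j < \<nu> i" "0 \<le> t1" "t1 < t2"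
      "flow q0 i t1 = flow q0 j t1" "flow q0 i t2 = flow q0 j t2" for i j t1 t2
  proof (rule no_second_zero_if_deriv_pos_at_zeros[of 0 "\<lambda>s. flow q0 i s - flow q0 j s"
        "\<lambda>t. velocity (\<lambda>k. flow q0 k t) i - velocity (\<lambda>k. flow q0 k t) j" t1 t2])
    show "((\<lambda>s. flow q0 i s - flow q0 j s) has_real_derivative
        velocity (\<lambda>k. flow q0 k t) i - velocity (\<lambda>k. flow q0 k t) j) (at t within {0..})" if "0 \<le> t" for t
      using flow_has_derivative[OF \<open>i \<in> {1..N}\<close> that] flow_has_derivative[OF \<open>j \<in> {1..N}\<close> that]
      by (rule derivative_intros)
    show "0 < velocity (\<lambda>k. flow q0 k t) i - velocity (\<lambda>k. flow q0 k t) j"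
      if "0 \<le> t" "flow q0 i t - flow q0 j t = 0" for t
      using velocity_same_position(2)[of "\<lambda>k. flow q0 k t" i j] that \<open>\<nu> j < \<nu> i\<close> by simp
  qed (use that in auto)
  have earlier_meeting_impossible: False
    if "0 \<le> t1" "t1 < t2" "flow q0 i t1 = flow q0 j t1" "flow q0 i t2 = flow q0 j t2" for t1 t2
  proof (cases "\<nu> j < \<nu> i")
    case True
    then show False
      by (rule no_second_meeting[OF assms(1,2) _ that])
  next
    case False
    then have "\<nu> i < \<nu> j" using assms(3) by linarith
    then show False
      using no_second_meeting[OF assms(2,1) _ that(1,2)] that(3,4) by simp
  qed
  show ?thesis
  proof (cases a b rule: linorder_cases)
    case less
    then show ?thesis using earlier_meeting_impossible[of a b] assms by blast
  next
    case greater
    then show ?thesis using earlier_meeting_impossible[of b a] assms by blast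
  qed
qed

lemma collision_times_finite:
  assumes "i \<in> {1..N}"
  shows "finite {t. 0 < t \<and> card (Cset N (flow q0) i t) \<noteq> 0}"
proof (rule finite_subset)
  show "{t. 0 < t \<and> card (Cset N (flow q0) i t) \<noteq> 0}
      \<subseteq> (\<Union>j\<in>{1..N}. {t. 0 \<le> t \<and> \<nu> i \<noteq> \<nu> j \<and> flow q0 i t = flow q0 j t})"
  proof
    fix t assume t: "t \<in> {t. 0 < t \<and> card (Cset N (flow q0) i t) \<noteq> 0}"
    then have "Cset N (flow q0) i t \<noteq> {}" by auto
    then obtain j where "j \<in> Cset N (flow q0) i t" by blast
    then show "t \<in> (\<Union>j\<in>{1..N}. {t. 0 \<le> t \<and> \<nu> i \<noteq> \<nu> j \<and> flow q0 i t = flow q0 j t})"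
      using collide_iff[OF assms, of t j] t by auto
  qed
  show "finite (\<Union>j\<in>{1..N}. {t. 0 \<le> t \<and> \<nu> i \<noteq> \<nu> j \<and> flow q0 i t = flow q0 j t})"
  proof (intro finite_UN_I finite_atLeastAtMost finite_if_subsingleton)
    fix j a b
    assume "j \<in> {1..N}" and a: "a \<in> {t. 0 \<le> t \<and> \<nu> i \<noteq> \<nu> j \<and> flow q0 i t = flow q0 j t}"
      and b: "b \<in> {t. 0 \<le> t \<and> \<nu> i \<noteq> \<nu> j \<and> flow q0 i t = flow q0 j t}"
    show "a = b"
      by (rule meeting_time_unique[OF assms \<open>j \<in> {1..N}\<close>]) (use a b in auto)
  qed
qed

lemma stick_set_mono:
  assumes "i \<in> {1..N}" "0 \<le> s" "s \<le> t"
  shows "Sset N (flow q0) i s \<subseteq> Sset N (flow q0) i t"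
  using stick_iff[OF assms(1)] sticking_persists[OF assms(1) _ _ assms(2,3)] assms(2,3) by auto

lemma card_stick_mono_on: "i \<in> {1..N} \<Longrightarrow> mono_on {0..} (\<lambda>s. real (card (Sset N (flow q0) i s)))"
  using stick_set_mono by (intro mono_onI of_nat_mono card_mono) (auto simp: Sset_def)

lemma eventually_flow_ne:
  assumes "i \<in> {1..N}" "j \<in> {1..N}" "0 \<le> t" "flow q0 i t \<noteq> flow q0 j t"
  shows "\<forall>\<^sub>F s in at t within {0..}. flow q0 i s \<noteq> flow q0 j s"
proof -
  have "((\<lambda>s. flow q0 i s - flow q0 j s) \<longlongrightarrow> flow q0 i t - flow q0 j t) (at t within {0..})"
    using continuous_on_flow[OF assms(1)] continuous_on_flow[OF assms(2)] assms(3)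
    by (intro tendsto_intros) (auto simp: continuous_on_def)
  then have "\<forall>\<^sub>F s in at t within {0..}. flow q0 i s - flow q0 j s \<noteq> 0"
    by (rule tendsto_imp_eventually_ne) (use assms(4) in simp)
  then show ?thesis by (rule eventually_mono) simp
qed

lemma card_stick_continuous_at_right:
  assumes "i \<in> {1..N}" "0 \<le> t"
  shows "continuous (at_right t) (\<lambda>s. real (card (Sset N (flow q0) i s)))"
  unfolding continuous_within
proof (rule tendsto_card_if_eventually_same_members[of "{1..N}"])
  show "finite {1..N}" by simp
  show "Sset N (flow q0) i s \<subseteq> {1..N}" for s
    unfolding Sset_def by auto
  fix j assume j: "j \<in> {1..N}"
  have later: "\<forall>\<^sub>F s in at_right t. t < s"
    by (rule eventually_at_right_less)
  show "\<forall>\<^sub>F s in at_right t. j \<in> Sset N (flow q0) i s \<longleftrightarrow> j \<in> Sset N (flow q0) i t"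
  proof (cases "\<nu> i = \<nu> j \<and> flow q0 i t \<noteq> flow q0 j t")
    case True
    have "at_right t \<le> at t within {0..}"
      using assms(2) by (intro at_le) auto
    then have "\<forall>\<^sub>F s in at_right t. flow q0 i s \<noteq> flow q0 j s"
      using eventually_flow_ne[OF assms(1) j assms(2)] True by (auto elim: filter_leD)
    with later show ?thesis
    proof eventually_elim
      case (elim s)
      then show ?case
        using stick_iff[OF assms(1), of s j] stick_iff[OF assms(1,2), of j] True assms(2) by auto
    qed
  next
    case False
    from later show ?thesis
    proof (rule eventually_mono)
      fix s assume "t < s"
      show "j \<in> Sset N (flow q0) i s \<longleftrightarrow> j \<in> Sset N (flow q0) i t"
      proof
        assume "j \<in> Sset N (flow q0) i t"
        then show "j \<in> Sset N (flow q0) i s"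
          using stick_set_mono[OF assms(1,2), of s] \<open>t < s\<close> by auto
      next
        assume "j \<in> Sset N (flow q0) i s"
        then have "\<nu> i = \<nu> j" "flow q0 i s = flow q0 j s"
          using stick_iff[OF assms(1), of s j] \<open>t < s\<close> assms(2) by auto
        with False have "flow q0 i t = flow q0 j t" by simp
        then show "j \<in> Sset N (flow q0) i t"
          using stick_iff[OF assms(1,2), of j] \<open>\<nu> i = \<nu> j\<close> j by auto
      qed
    qed
  qed
qed

definition first_meetings :: "(nat \<Rightarrow> real) \<Rightarrow> nat \<Rightarrow> real set" where
  "first_meetings q0 i = (\<Union>j\<in>{1..N}. {t. 0 \<le> t \<and> \<nu> i = \<nu> j \<and> flow q0 i t = flow q0 j t \<and>
     (\<forall>s\<in>{0..<t}. flow q0 i s \<noteq> flow q0 j s)})"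

lemma first_meetings_finite: "finite (first_meetings q0 i)"
  unfolding first_meetings_def
  by (intro finite_UN_I finite_atLeastAtMost finite_if_subsingleton) (force simp: neq_iff)

lemma card_stick_continuous_off_first_meetings:
  assumes "i \<in> {1..N}" "0 < t" "t \<notin> first_meetings q0 i"
  shows "continuous (at t within {0<..}) (\<lambda>s. real (card (Sset N (flow q0) i s)))"
  unfolding continuous_within
proof (rule tendsto_card_if_eventually_same_members[of "{1..N}"])
  show "finite {1..N}" by simp
  show "Sset N (flow q0) i s \<subseteq> {1..N}" for s
    unfolding Sset_def by auto
  fix j assume j: "j \<in> {1..N}"
  have pos: "\<forall>\<^sub>F s in at t within {0<..}. 0 < s"
    by (simp add: eventually_at_filter)
  show "\<forall>\<^sub>F s in at t within {0<..}. j \<in> Sset N (flow q0) i s \<longleftrightarrow> j \<in> Sset N (flow q0) i t"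
  proof (cases "\<nu> i = \<nu> j")
    case False
    from pos show ?thesis
      by (rule eventually_mono) (use stick_iff[OF assms(1)] assms(2) False in auto)
  next
    case same_\<nu>: True
    show ?thesis
    proof (cases "flow q0 i t = flow q0 j t")
      case True
      then obtain s0 where s0: "0 \<le> s0" "s0 < t" "flow q0 i s0 = flow q0 j s0"
        using assms(2,3) same_\<nu> j unfolding first_meetings_def by fastforce
      have "\<forall>\<^sub>F s in at t within {0<..}. s0 < s"
        using order_tendstoD(1)[OF tendsto_ident_at s0(2)] .
      then show ?thesis
        by (rule eventually_mono)
          (use stick_iff[OF assms(1)] sticking_persists[OF assms(1) j same_\<nu> s0(1) _ s0(3)] True same_\<nu> j s0 assms(2) in auto)
    next
      case False
      have "at t within {0<..} \<le> at t within {0..}"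
        by (intro at_le) auto
      then have "\<forall>\<^sub>F s in at t within {0<..}. flow q0 i s \<noteq> flow q0 j s"
        using eventually_flow_ne[OF assms(1) j _ False] assms(2) by (auto elim: filter_leD)
      with pos show ?thesis
        by eventually_elim (use stick_iff[OF assms(1)] assms(2) False in auto)
    qed
  qed
qed

lemma Tset_finite: "finite (Tset N (flow q0))"
proof (rule finite_subset)
  show "Tset N (flow q0) \<subseteq> (\<Union>i\<in>{1..N}. {t. 0 < t \<and> card (Cset N (flow q0) i t) \<noteq> 0} \<union> first_meetings q0 i)"
    unfolding Tset_def using card_stick_continuous_off_first_meetings by blast
  show "finite (\<Union>i\<in>{1..N}. {t. 0 < t \<and> card (Cset N (flow q0) i t) \<noteq> 0} \<union> first_meetings q0 i)"
    using collision_times_finite first_meetings_finite by auto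
qed

end

lemma particle_system_if_deriv_pos:
  fixes g g' :: "real \<Rightarrow> real"
  assumes "0 \<le> \<kappa>" "\<alpha> < 1" "g 0 = 0"
    and der: "\<And>x. 0 \<le> x \<Longrightarrow> (g has_real_derivative g' x) (at x within {0..})"
    and pos: "\<And>x. 0 \<le> x \<Longrightarrow> 0 < g' x"
  shows "particle_system \<kappa> \<alpha> g"
proof
  show "continuous_on {0..} g"
    by (rule DERIV_continuous_on[where D = g']) (use der in auto)
  show "strict_mono_on {0..} g"
    by (rule strict_mono_on_if_deriv_pos[OF der pos])
qed (use assms in auto)

theorem proposition3p3:
  fixes N :: nat and \<kappa> \<alpha> :: real and g g' :: "real \<Rightarrow> real"
    and q0 \<nu> :: "nat \<Rightarrow> real"
  assumes N: "N \<ge> 1" and kappa: "\<kappa> > 0" and alpha: "0 < \<alpha>" "\<alpha> < 1"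
    and g_deriv: "\<forall>x\<ge>0. (g has_real_derivative g' x) (at x within {0..})"
    and g'_cont: "continuous_on {0..} g'"
    and g0: "g 0 = 0"
    and g'_bounds: "\<forall>b\<ge>0. \<exists>m M. 0 < m \<and> (\<forall>x\<in>{0..b}. m \<le> g' x \<and> g' x \<le> M)"
    and g_conv: "convex_on {0<..} g \<or> concave_on {0<..} g"
  shows "\<exists>Q. is_classical_solution g \<kappa> \<alpha> N q0 \<nu> Q
     \<and> (\<forall>Q'. is_classical_solution g \<kappa> \<alpha> N q0 \<nu> Q'
              \<longrightarrow> (\<forall>i\<in>{1..N}. \<forall>t\<ge>0. Q' i t = Q i t))
     \<and> (\<forall>i\<in>{1..N}. finite {t. t > 0 \<and> card (Cset N Q i t) \<noteq> 0})
     \<and> (\<forall>i\<in>{1..N}. \<forall>s t. 0 \<le> s \<and> s \<le> t \<longrightarrow> Sset N Q i s \<subseteq> Sset N Q i t)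
     \<and> (\<forall>i\<in>{1..N}. mono_on {0..} (\<lambda>s. real (card (Sset N Q i s)))
          \<and> (\<forall>t\<ge>0. continuous (at_right t) (\<lambda>s. real (card (Sset N Q i s)))))
     \<and> finite (Tset N Q)"
proof -
  have g'_pos: "0 < g' x" if x: "0 \<le> x" for x
  proof -
    obtain m M where "0 < m" and "\<forall>y\<in>{0..x}. m \<le> g' y \<and> g' y \<le> M"
      using g'_bounds x by blast
    then show ?thesis
      using x by force
  qed
  interpret particle_system N \<kappa> \<alpha> g \<nu>
    using kappa alpha(2) g0 g_deriv g'_pos by (intro particle_system_if_deriv_pos[where g' = g']) auto
  show ?thesis
  proof (intro exI[of _ "flow q0"] conjI allI impI ballI)
    show "is_classical_solution g \<kappa> \<alpha> N q0 \<nu> (flow q0)"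
      by (rule flow_is_classical_solution)
    show "Q' i t = flow q0 i t" if "is_classical_solution g \<kappa> \<alpha> N q0 \<nu> Q'" "i \<in> {1..N}" "0 \<le> t" for Q' i t
      using classical_solution_eq_flow[OF that] .
    show "finite {t. 0 < t \<and> card (Cset N (flow q0) i t) \<noteq> 0}" if "i \<in> {1..N}" for i
      using collision_times_finite[OF that] .
  qed (simp_all add: stick_set_mono card_stick_mono_on card_stick_continuous_at_right Tset_finite)
qed

end
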